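(* Let $\zeta$ be a primitive aperiodic binary substitution of constant length. Then for every $y\in X_\zeta$ and every $m,\ell\in\mathbb N$, \[ \lim_{h\to\infty}\frac{\mathrm{RR}_{\ell+1}(y^{(m)},\infty,2^{-h})}{\mathrm{RR}_\ell(y^{(m)},\infty,2^{-h})}=1 . \]
   Context: Alphabet $A=\{0,1\}$, $\Sigma=A^{\mathbb N_0}$ with metric $\rho(y,z)=2^{-\min\{i\ge0:\,y_i\ne z_i\}}$ ($y\ne z$), shift $\sigma$. A binary substitution of constant length $q\ge2$ is $\zeta:A\to A^*$ with $|\zeta(0)|=|\zeta(1)|=q$, extended to words by concatenation; $\mathcal L_\zeta$ = set of subwords of words $\zeta^k(a)$; $X_\zeta=\{y\in\Sigma:y_0\dots y_{n-1}\in\mathcal L_\zeta\ \forall n\}$. $\zeta$ is primitive if for some $k$ every letter occurs in $\zeta^k(a)$ for all $a$; aperiodic if $X_\zeta$ contains a non-$\sigma$-periodic sequence. For a sequence $z$ (finite alphabet, analogous metric and shift), $\varepsilon>0$, $n\ge2$: recurrence plot $R(z,n,\varepsilon)$ is the $n\times n$ matrix ($0\le i,j<n$) with entry $1$ iff $\rho(\sigma^iz,\sigma^jz)\le\varepsilon$. A line of length $\ell$ is $(i,j,\ell)$ with $0\le i,j\le n-\ell$, $i\ne j$, entries $(i+k,j+k)=1$ for $0\le k<\ell$, entry $(i-1,j-1)=0$ if $\min\{i,j\}>0$, entry $(i+\ell,j+\ell)=0$ if $\max\{i,j\}<n-\ell$. $N_\ell$ = number of lines of length exactly $\ell$, $\lambda_\ell=N_\ell/(n^2-n)$,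 recurrence rate $\mathrm{RR}_\ell=\sum_{l\ge\ell}l\lambda_l$; $\mathrm{RR}_\ell(z,\infty,\varepsilon)=\lim_{n\to\infty}\mathrm{RR}_\ell(z,n,\varepsilon)$ (which exists and is positive in the present setting). Embedding: $y^{(m)}$ is the sequence over $A^m$ whose $j$-th letter is $y_j\dots y_{j+m-1}$. *)

theory Defs
  imports Complex_Main
begin

text \<open>Alphabet A = {0,1} is rendered as bool (False = 0, True = 1).
  One-sided sequences are functions nat => 'a.\<close>

definition shift :: "nat \<Rightarrow> (nat \<Rightarrow> 'a) \<Rightarrow> (nat \<Rightarrow> 'a)" where
  "shift i z = (\<lambda>k. z (k + i))"

definition rho :: "(nat \<Rightarrow> 'a) \<Rightarrow> (nat \<Rightarrow> 'a) \<Rightarrow> real" where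
  "rho y z = (if y = z then 0 else (1/2) ^ (LEAST i. y i \<noteq> z i))"

definition subst_word :: "(bool \<Rightarrow> bool list) \<Rightarrow> bool list \<Rightarrow> bool list" where
  "subst_word \<zeta> w = concat (map \<zeta> w)"

definition const_length_subst :: "(bool \<Rightarrow> bool list) \<Rightarrow> nat \<Rightarrow> bool" where
  "const_length_subst \<zeta> q \<longleftrightarrow> q \<ge> 2 \<and> (\<forall>a. length (\<zeta> a) = q)"

definition subst_language :: "(bool \<Rightarrow> bool list) \<Rightarrow> bool list set" where
  "subst_language \<zeta> = {w. \<exists>k a u v. (subst_word \<zeta> ^^ k) [a] = u @ w @ v}"

definition subshift :: "(bool \<Rightarrow> bool list) \<Rightarrow> (nat \<Rightarrow> bool) set" where
  "subshift \<zeta> = {y. \<forall>n. map y [0..<n] \<in> subst_language \<zeta>}"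

definition primitive_subst :: "(bool \<Rightarrow> bool list) \<Rightarrow> bool" where
  "primitive_subst \<zeta> \<longleftrightarrow> (\<exists>k. \<forall>a b. b \<in> set ((subst_word \<zeta> ^^ k) [a]))"

definition shift_periodic :: "(nat \<Rightarrow> 'a) \<Rightarrow> bool" where
  "shift_periodic y \<longleftrightarrow> (\<exists>p>0. shift p y = y)"

definition aperiodic_subst :: "(bool \<Rightarrow> bool list) \<Rightarrow> bool" where
  "aperiodic_subst \<zeta> \<longleftrightarrow> (\<exists>y \<in> subshift \<zeta>. \<not> shift_periodic y)"

definition rp_entry :: "(nat \<Rightarrow> 'a) \<Rightarrow> real \<Rightarrow> nat \<Rightarrow> nat \<Rightarrow> bool" where
  "rp_entry z \<epsilon> i j \<longleftrightarrow> rho (shift i z) (shift j z) \<le> \<epsilon>"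

definition is_line :: "(nat \<Rightarrow> 'a) \<Rightarrow> nat \<Rightarrow> real \<Rightarrow> nat \<Rightarrow> nat \<Rightarrow> nat \<Rightarrow> bool" where
  "is_line z n \<epsilon> i j l \<longleftrightarrow>
     l \<le> n \<and> i \<le> n - l \<and> j \<le> n - l \<and> i \<noteq> j \<and>
     (\<forall>k<l. rp_entry z \<epsilon> (i + k) (j + k)) \<and>
     (min i j > 0 \<longrightarrow> \<not> rp_entry z \<epsilon> (i - 1) (j - 1)) \<and>
     (max i j < n - l \<longrightarrow> \<not> rp_entry z \<epsilon> (i + l) (j + l))"

definition num_lines :: "(nat \<Rightarrow> 'a) \<Rightarrow> nat \<Rightarrow> real \<Rightarrow> nat \<Rightarrow> nat" where
  "num_lines z n \<epsilon> l = card {(i, j). is_line z n \<epsilon> i j l}"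

definition line_freq :: "(nat \<Rightarrow> 'a) \<Rightarrow> nat \<Rightarrow> real \<Rightarrow> nat \<Rightarrow> real" where
  "line_freq z n \<epsilon> l = real (num_lines z n \<epsilon> l) / (real n ^ 2 - real n)"

text \<open>RR_l(z,n,eps) = sum over l' >= l of l' * lambda_l'; lines have length at most n.\<close>
definition RR :: "nat \<Rightarrow> (nat \<Rightarrow> 'a) \<Rightarrow> nat \<Rightarrow> real \<Rightarrow> real" where
  "RR l z n \<epsilon> = (\<Sum>l'\<in>{l..n}. real l' * line_freq z n \<epsilon> l')"

definition RR_inf :: "nat \<Rightarrow> (nat \<Rightarrow> 'a) \<Rightarrow> real \<Rightarrow> real" where
  "RR_inf l z \<epsilon> = lim (\<lambda>n. RR l z n \<epsilon>)"

definition delay_embed :: "nat \<Rightarrow> (nat \<Rightarrow> 'a) \<Rightarrow> (nat \<Rightarrow> 'a list)" where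
  "delay_embed m y = (\<lambda>j. map y [j..<j + m])"

end

theory Submission
  imports Defs "HOL-Real_Asymp.Real_Asymp"
begin

text \<open>
  For \<open>\<epsilon> = 2\<^sup>-\<^sup>h\<close>, the recurrence plot of \<open>y\<^sup>(\<^sup>m\<^sup>)\<close> has a diagonal segment of
  length \<open>l\<close> at \<open>(i, j)\<close> exactly when \<open>y\<close> agrees on the \<open>L = h + m + l - 2\<close> symbols
  starting at \<open>i\<close> and at \<open>j\<close>. Counting lines as segments that extend to neither side gives
  \<open>RR\<^sub>l(y\<^sup>(\<^sup>m\<^sup>), \<infinity>, 2\<^sup>-\<^sup>h) = l D(L) - (l - 1) D(L + 1)\<close>, where \<open>D(L)\<close> is the sum of the
  squared frequencies \<open>\<mu>(w)\<^sup>2\<close> of the words \<open>w\<close> of length \<open>L\<close>. The frequencies exist,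
  uniformly on the language, because the frequencies of \<open>w\<close> in \<open>\<zeta>\<^sup>k(0)\<close> and in \<open>\<zeta>\<^sup>k(1)\<close>
  approach each other geometrically, with ratio \<open>|n\<^sub>1(\<zeta>(1)) - n\<^sub>1(\<zeta>(0))| / q < 1\<close> by
  primitivity.

  The increments \<open>D(L) - D(L + 1)\<close> are nonnegative and decreasing. Aperiodicity forces
  \<open>\<zeta>(0) \<noteq> \<zeta>(1)\<close>, so applying \<open>\<zeta>\<close> to a pair of positions that agree on exactly \<open>L\<close>
  symbols yields \<open>q\<close> pairs that agree on at least \<open>q L - q + 1\<close> but not on \<open>q L + q\<close>
  symbols; hence \<open>D(L) - D(L + 1) \<le> q (D(a) - D(a + 2 q - 1))\<close> with
  \<open>a = q L - q + 1 = L + (q - 1)(L - 1)\<close>. The right side is at most \<open>q (2 q - 1)\<close> times the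
  increment at \<open>a\<close>, the smallest of \<open>(q - 1)(L - 1)\<close> increments summing to at most \<open>D(L)\<close>.
  So the increments are \<open>O(D(L) / L)\<close>, and the ratio of consecutive recurrence rates tends
  to \<open>1\<close>.
\<close>

section \<open>Recurrence plots and agreement of shifted sequences\<close>

definition rp_segments :: "(nat \<Rightarrow> 'a) \<Rightarrow> nat \<Rightarrow> real \<Rightarrow> nat \<Rightarrow> (nat \<times> nat) set" where
  "rp_segments z n \<epsilon> l =
     {(i, j). i + l \<le> n \<and> j + l \<le> n \<and> i \<noteq> j \<and> (\<forall>k<l. rp_entry z \<epsilon> (i + k) (j + k))}"

lemma finite_rp_segments: "finite (rp_segments z n \<epsilon> l)"
  by (rule finite_subset[of _ "{..n} \<times> {..n}"]) (auto simp: rp_segments_def)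

lemma rp_segments_empty: "n < l \<Longrightarrow> rp_segments z n \<epsilon> l = {}"
  by (auto simp: rp_segments_def)

lemma rp_segments_Suc_iff:
  "(i, j) \<in> rp_segments z n \<epsilon> (Suc l) \<longleftrightarrow>
     (i, j) \<in> rp_segments z n \<epsilon> l \<and> i + l < n \<and> j + l < n \<and> rp_entry z \<epsilon> (i + l) (j + l)"
  by (auto simp: rp_segments_def less_Suc_eq)

lemma Suc_Suc_in_rp_segments_iff:
  "(Suc i, Suc j) \<in> map_prod Suc Suc ` rp_segments z n \<epsilon> (Suc l) \<longleftrightarrow>
     (Suc i, Suc j) \<in> rp_segments z n \<epsilon> l \<and> rp_entry z \<epsilon> i j"
  by (auto simp: rp_segments_def less_Suc_eq_0_disj)

text \<open>A line of length \<open>l\<close> is a segment that extends neither forward, to a segment of length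
  \<open>l + 1\<close> at \<open>(i, j)\<close>, nor backward, to one at \<open>(i - 1, j - 1)\<close>.\<close>

lemma lines_eq_rp_segments:
  "{(i, j). is_line z n \<epsilon> i j l} =
     rp_segments z n \<epsilon> l - (rp_segments z n \<epsilon> (Suc l) \<union> map_prod Suc Suc ` rp_segments z n \<epsilon> (Suc l))"
proof -
  have "is_line z n \<epsilon> i j l \<longleftrightarrow> (i, j) \<in> rp_segments z n \<epsilon> l \<and> (i, j) \<notin> rp_segments z n \<epsilon> (Suc l)
          \<and> (i, j) \<notin> map_prod Suc Suc ` rp_segments z n \<epsilon> (Suc l)" for i j
  proof (cases "i = 0 \<or> j = 0")
    case True
    then show ?thesis by (auto simp: is_line_def rp_segments_Suc_iff) (auto simp: rp_segments_def)
  next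
    case False
    then obtain i' j' where "i = Suc i'" "j = Suc j'" by (metis not0_implies_Suc)
    then show ?thesis by (auto simp: is_line_def rp_segments_Suc_iff Suc_Suc_in_rp_segments_iff) (auto simp: rp_segments_def)
  qed
  then show ?thesis by auto
qed

lemma rp_segments_Int_shift:
  "rp_segments z n \<epsilon> (Suc l) \<inter> map_prod Suc Suc ` rp_segments z n \<epsilon> (Suc l)
     = map_prod Suc Suc ` rp_segments z n \<epsilon> (Suc (Suc l))"
proof (intro set_eqI iffI)
  fix p assume "p \<in> rp_segments z n \<epsilon> (Suc l) \<inter> map_prod Suc Suc ` rp_segments z n \<epsilon> (Suc l)"
  then obtain i j where "p = (Suc i, Suc j)" "(Suc i, Suc j) \<in> rp_segments z n \<epsilon> (Suc l)"
    "(i, j) \<in> rp_segments z n \<epsilon> (Suc l)" by auto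
  then show "p \<in> map_prod Suc Suc ` rp_segments z n \<epsilon> (Suc (Suc l))"
    by (auto simp: rp_segments_def less_Suc_eq intro!: image_eqI[of _ _ "(i, j)"])
qed (auto simp: rp_segments_def)

lemma num_lines_eq_rp_segments:
  fixes z :: "nat \<Rightarrow> 'a" and n l :: nat and \<epsilon> :: real
  defines "S k \<equiv> real (card (rp_segments z n \<epsilon> k))"
  shows "real (num_lines z n \<epsilon> l) = S l - 2 * S (Suc l) + S (Suc (Suc l))"
proof -
  let ?B = "rp_segments z n \<epsilon> (Suc l)" and ?C = "map_prod Suc Suc ` rp_segments z n \<epsilon> (Suc l)"
  have card_shift: "card (map_prod Suc Suc ` X) = card X" for X :: "(nat \<times> nat) set"
    by (rule card_image) (auto simp: inj_on_def)
  have sub: "?B \<union> ?C \<subseteq> rp_segments z n \<epsilon> l"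
    unfolding rp_segments_def by force
  have "card ({(i, j). is_line z n \<epsilon> i j l}) = card (rp_segments z n \<epsilon> l) - card (?B \<union> ?C)"
    unfolding lines_eq_rp_segments by (rule card_Diff_subset[OF finite_subset[OF sub finite_rp_segments] sub])
  moreover have "card (?B \<union> ?C) \<le> card (rp_segments z n \<epsilon> l)"
    by (rule card_mono[OF finite_rp_segments sub])
  moreover have "card (?B \<union> ?C) + card (?B \<inter> ?C) = card ?B + card ?C"
    by (rule card_Un_Int[OF finite_rp_segments finite_imageI[OF finite_rp_segments], symmetric])
  ultimately show ?thesis
    unfolding num_lines_def S_def rp_segments_Int_shift card_shift by simp
qed

lemma sum_weighted_second_diff:
  fixes S :: "nat \<Rightarrow> real"
  shows "(\<Sum>k\<in>{l..<l + d}. real k * (S k - 2 * S (Suc k) + S (Suc (Suc k)))) =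
     real l * S l - (real l - 1) * S (Suc l) - real (l + d) * S (l + d) + (real (l + d) - 1) * S (Suc (l + d))"
  by (induction d) (simp_all add: algebra_simps)

lemma RR_eq_rp_segments:
  "RR l z n \<epsilon> = (real l * real (card (rp_segments z n \<epsilon> l))
                         - (real l - 1) * real (card (rp_segments z n \<epsilon> (Suc l)))) / (real n ^ 2 - real n)"
proof -
  define S where "S k = real (card (rp_segments z n \<epsilon> k))" for k
  have "(\<Sum>k\<in>{l..n}. real k * (S k - 2 * S (Suc k) + S (Suc (Suc k)))) = real l * S l - (real l - 1) * S (Suc l)"
  proof (cases "l \<le> n")
    case True
    then have "{l..n} = {l..<l + (Suc n - l)}" by auto
    moreover have "S (l + (Suc n - l)) = 0" "S (Suc (l + (Suc n - l))) = 0"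
      using True by (auto simp: S_def rp_segments_empty)
    ultimately show ?thesis by (simp add: sum_weighted_second_diff)
  next
    case False
    then show ?thesis by (simp add: S_def rp_segments_empty)
  qed
  then show ?thesis
    unfolding RR_def line_freq_def num_lines_eq_rp_segments S_def[symmetric] by (simp flip: sum_divide_distrib)
qed

definition agree :: "(nat \<Rightarrow> 'a) \<Rightarrow> nat \<Rightarrow> nat \<Rightarrow> nat \<Rightarrow> bool" where
  "agree y L i j \<longleftrightarrow> (\<forall>s<L. y (i + s) = y (j + s))"

definition agree_count :: "(nat \<Rightarrow> 'a) \<Rightarrow> nat \<Rightarrow> nat \<Rightarrow> nat" where
  "agree_count y L N = card {(i, j). i < N \<and> j < N \<and> agree y L i j}"

lemma rp_entry_half_power_iff: "rp_entry z ((1/2) ^ h) i j \<longleftrightarrow> agree z h i j"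
proof (cases "shift i z = shift j z")
  case True
  then have "z (i + t) = z (j + t)" for t
    by (metis add.commute shift_def)
  with True show ?thesis by (simp add: rp_entry_def rho_def agree_def)
next
  case False
  define d where "d = (LEAST t. shift i z t \<noteq> shift j z t)"
  have "\<exists>t. z (t + i) \<noteq> z (t + j)"
    using False by (auto simp: shift_def)
  then have d: "z (d + i) \<noteq> z (d + j)"
    unfolding d_def shift_def by (rule LeastI_ex)
  have below_d: "z (t + i) = z (t + j)" if "t < d" for t
    using that unfolding d_def shift_def by (meson not_less_Least)
  have "rp_entry z ((1/2) ^ h) i j \<longleftrightarrow> (1/2 :: real) ^ d \<le> (1/2) ^ h"
    using False by (simp add: rp_entry_def rho_def d_def)
  also have "\<dots> \<longleftrightarrow> h \<le> d"
    by (rule power_decreasing_iff) simp_all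
  also have "\<dots> \<longleftrightarrow> agree z h i j"
  proof
    assume "h \<le> d"
    then show "agree z h i j"
      using below_d by (auto simp: agree_def add.commute)
  next
    assume "agree z h i j"
    then show "h \<le> d"
      using d unfolding agree_def by (metis add.commute not_less)
  qed
  finally show ?thesis .
qed

lemma all_agree_shifted_iff:
  assumes "l \<ge> 1" "L \<ge> 1"
  shows "(\<forall>k<l. agree y L (i + k) (j + k)) \<longleftrightarrow> agree y (L + l - 1) i j"
proof
  assume A: "\<forall>k<l. agree y L (i + k) (j + k)"
  show "agree y (L + l - 1) i j"
    unfolding agree_def
  proof (intro allI impI)
    fix s assume "s < L + l - 1"
    then have "s - (L - 1) < l" "s - (s - (L - 1)) < L" "s = s - (L - 1) + (s - (s - (L - 1)))"
      using assms by auto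
    then show "y (i + s) = y (j + s)"
      using A unfolding agree_def by (metis add.assoc)
  qed
next
  assume A: "agree y (L + l - 1) i j"
  show "\<forall>k<l. agree y L (i + k) (j + k)"
    unfolding agree_def
  proof (intro allI impI)
    fix k s assume "k < l" "s < L"
    then show "y (i + k + s) = y (j + k + s)"
      using A unfolding agree_def by (simp add: add.assoc)
  qed
qed

lemma agree_delay_embed_iff:
  assumes "h \<ge> 1" "m \<ge> 1"
  shows "agree (delay_embed m y) h i j \<longleftrightarrow> agree y (h + m - 1) i j"
proof -
  have "delay_embed m y a = delay_embed m y b \<longleftrightarrow> agree y m a b" for a b
    unfolding delay_embed_def agree_def by (auto simp: list_eq_iff_nth_eq)
  then have "agree (delay_embed m y) h i j \<longleftrightarrow> (\<forall>k<h. agree y m (i + k) (j + k))"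
    unfolding agree_def[of "delay_embed m y"] by simp
  also have "\<dots> \<longleftrightarrow> agree y (h + m - 1) i j"
    using all_agree_shifted_iff[OF assms(1,2), of y i j] by (simp add: add.commute)
  finally show ?thesis .
qed

lemma card_rp_segments_delay_embed:
  assumes "l \<ge> 1" "h \<ge> 1" "m \<ge> 1"
  shows "real (card (rp_segments (delay_embed m y) n ((1/2) ^ h) l))
           = real (agree_count y (h + m + l - 2) (Suc n - l)) - real (Suc n - l)"
proof -
  let ?N = "Suc n - l"
  let ?A = "{(i, j). i < ?N \<and> j < ?N \<and> agree y (h + m + l - 2) i j}"
  have "h + l - 1 + m - 1 = h + m + l - 2"
    using assms by simp
  then have "(\<forall>k<l. rp_entry (delay_embed m y) ((1/2) ^ h) (i + k) (j + k)) \<longleftrightarrow> agree y (h + m + l - 2) i j"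
    for i j
    using assms all_agree_shifted_iff[of l h "delay_embed m y" i j] agree_delay_embed_iff[of "h + l - 1" m y i j]
    by (simp add: rp_entry_half_power_iff)
  then have segments: "rp_segments (delay_embed m y) n ((1/2) ^ h) l = ?A - (\<lambda>i. (i, i)) ` {..<?N}"
    unfolding rp_segments_def by auto
  have diag: "(\<lambda>i. (i, i)) ` {..<?N} \<subseteq> ?A"
    by (auto simp: agree_def)
  have fin: "finite ?A"
    by (rule finite_subset[of _ "{..<?N} \<times> {..<?N}"]) auto
  have card_diag: "card ((\<lambda>i. (i, i)) ` {..<?N}) = ?N"
    by (simp add: card_image inj_on_def)
  have "card (?A - (\<lambda>i. (i, i)) ` {..<?N}) = card ?A - ?N"
    using card_Diff_subset[OF finite_subset[OF diag fin] diag] card_diag by simp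
  moreover have "?N \<le> card ?A"
    using card_mono[OF fin diag] card_diag by simp
  ultimately show ?thesis
    unfolding agree_count_def segments by simp
qed

definition partial_agree_pairs :: "(nat \<Rightarrow> 'a) \<Rightarrow> nat \<Rightarrow> nat \<Rightarrow> nat \<Rightarrow> (nat \<times> nat) set" where
  "partial_agree_pairs y L L' N = {(i, j). i < N \<and> j < N \<and> agree y L i j \<and> \<not> agree y L' i j}"

lemma agree_mono: "L \<le> L' \<Longrightarrow> agree y L' i j \<Longrightarrow> agree y L i j"
  by (auto simp: agree_def)

lemma finite_partial_agree_pairs: "finite (partial_agree_pairs y L L' N)"
  by (rule finite_subset[of _ "{..<N} \<times> {..<N}"]) (auto simp: partial_agree_pairs_def)

lemma card_partial_agree_pairs:
  assumes "L \<le> L'"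
  shows "real (card (partial_agree_pairs y L L' N)) = real (agree_count y L N) - real (agree_count y L' N)"
proof -
  let ?A = "\<lambda>L. {(i, j). i < N \<and> j < N \<and> agree y L i j}"
  have fin: "finite (?A L)"
    by (rule finite_subset[of _ "{..<N} \<times> {..<N}"]) auto
  have sub: "?A L' \<subseteq> ?A L"
    using agree_mono[OF assms] by auto
  have "partial_agree_pairs y L L' N = ?A L - ?A L'"
    using agree_mono[OF assms] by (auto simp: partial_agree_pairs_def)
  then show ?thesis
    unfolding agree_count_def using card_Diff_subset[OF finite_subset[OF sub fin] sub] card_mono[OF fin sub]
    by simp
qed

text \<open>A pair disagreeing first at offset \<open>L + 1\<close> becomes, one step later, a pair disagreeing
  first at offset \<open>L\<close>.\<close>

lemma card_partial_agree_pairs_Suc_le: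
  "card (partial_agree_pairs y (Suc L) (Suc (Suc L)) N) \<le> card (partial_agree_pairs y L (Suc L) (Suc N))"
proof -
  have "map_prod Suc Suc ` partial_agree_pairs y (Suc L) (Suc (Suc L)) N \<subseteq> partial_agree_pairs y L (Suc L) (Suc N)"
    by (auto simp: partial_agree_pairs_def agree_def less_Suc_eq_0_disj)
  then have "card (map_prod Suc Suc ` partial_agree_pairs y (Suc L) (Suc (Suc L)) N)
               \<le> card (partial_agree_pairs y L (Suc L) (Suc N))"
    by (rule card_mono[OF finite_partial_agree_pairs])
  moreover have "inj_on (map_prod Suc Suc) X" for X :: "(nat \<times> nat) set"
    by (auto simp: inj_on_def)
  ultimately show ?thesis
    by (simp add: card_image)
qed

section \<open>Occurrences of words\<close>

definition occurrences :: "'a list \<Rightarrow> 'a list \<Rightarrow> nat set" where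
  "occurrences w x = {i. i + length w \<le> length x \<and> take (length w) (drop i x) = w}"

definition occ :: "'a list \<Rightarrow> 'a list \<Rightarrow> nat" where
  "occ w x = card (occurrences w x)"

lemma finite_occurrences: "finite (occurrences w x)"
  by (rule finite_subset[of _ "{..length x}"]) (auto simp: occurrences_def)

lemma occ_le_length:
  assumes "w \<noteq> []"
  shows "occ w x \<le> length x"
proof -
  have "occurrences w x \<subseteq> {..<length x}"
    using assms by (auto simp: occurrences_def Suc_le_eq dest: le_trans[rotated] simp flip: length_greater_0_conv)
  then show ?thesis
    unfolding occ_def using card_mono[of "{..<length x}"] by fastforce
qed

lemma occ_take_le: "occ w (take n x) \<le> occ w x"
  unfolding occ_def
  by (rule card_mono[OF finite_occurrences]) (auto simp: occurrences_def take_drop min_def)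

lemma occ_drop_le:
  assumes "w \<noteq> []"
  shows "occ w (drop n x) \<le> occ w x"
proof -
  have "occurrences w (drop n x) \<subseteq> (\<lambda>i. i - n) ` occurrences w x"
  proof
    fix i assume "i \<in> occurrences w (drop n x)"
    then have "i + n \<in> occurrences w x"
      using assms by (cases "n \<le> length x") (auto simp: occurrences_def add.commute)
    then show "i \<in> (\<lambda>i. i - n) ` occurrences w x"
      by (rule rev_image_eqI) simp
  qed
  then show ?thesis
    unfolding occ_def by (meson card_image_le card_mono finite_imageI finite_occurrences order_trans)
qed

lemma occ_append_ge:
  assumes "w \<noteq> []"
  shows "occ w u + occ w v \<le> occ w (u @ v)"
proof -
  let ?V = "(\<lambda>i. i + length u) ` occurrences w v"
  have "occurrences w u \<inter> ?V = {}"
    using assms by (auto simp: occurrences_def)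
  then have "occ w u + occ w v = card (occurrences w u \<union> ?V)"
    unfolding occ_def by (simp add: card_Un_disjoint finite_occurrences card_image)
  also have "\<dots> \<le> occ w (u @ v)"
    unfolding occ_def by (rule card_mono[OF finite_occurrences]) (auto simp: occurrences_def)
  finally show ?thesis .
qed

lemma occ_append_le: "occ w (u @ v) \<le> occ w u + occ w v + length w"
proof -
  let ?V = "(\<lambda>i. i + length u) ` occurrences w v"
  let ?straddle = "{length u - length w..<length u}"
  have "occurrences w (u @ v) \<subseteq> occurrences w u \<union> ?V \<union> ?straddle"
  proof
    fix i assume i: "i \<in> occurrences w (u @ v)"
    show "i \<in> occurrences w u \<union> ?V \<union> ?straddle"
    proof (cases "length u \<le> i")
      case True
      then have "i - length u \<in> occurrences w v"
        using i by (auto simp: occurrences_def)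
      then show ?thesis
        using True by (auto intro: rev_image_eqI[of "i - length u"])
    qed (use i in \<open>auto simp: occurrences_def\<close>)
  qed
  then have "occ w (u @ v) \<le> card (occurrences w u \<union> ?V \<union> ?straddle)"
    unfolding occ_def by (intro card_mono) (auto simp: finite_occurrences)
  also have "\<dots> \<le> card (occurrences w u) + card ?V + card ?straddle"
    by (meson card_Un_le add_le_mono order_trans order_refl)
  also have "\<dots> \<le> occ w u + occ w v + length w"
    unfolding occ_def by (intro add_mono card_image_le) (auto simp: finite_occurrences)
  finally show ?thesis .
qed

lemma sum_occ_le_occ_concat: "w \<noteq> [] \<Longrightarrow> (\<Sum>b\<leftarrow>bs. occ w b) \<le> occ w (concat bs)"
  by (induction bs) (auto intro: order_trans[OF _ occ_append_ge])

lemma occ_concat_le: "w \<noteq> [] \<Longrightarrow> occ w (concat bs) \<le> (\<Sum>b\<leftarrow>bs. occ w b) + length bs * length w"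
proof (induction bs)
  case Nil
  then show ?case
    using occ_le_length[of w "[]"] by simp
next
  case (Cons b bs)
  then show ?case
    using occ_append_le[of w b "concat bs"] by simp
qed

lemma take_concat_blocks:
  "\<forall>b\<in>set bs. length b = B \<Longrightarrow> take (j * B) (concat bs) = concat (take j bs)"
proof (induction bs arbitrary: j)
  case (Cons b bs)
  then show ?case by (cases j) simp_all
qed simp

lemma drop_concat_blocks:
  "\<forall>b\<in>set bs. length b = B \<Longrightarrow> drop (j * B) (concat bs) = concat (drop j bs)"
proof (induction bs arbitrary: j)
  case (Cons b bs)
  then show ?case by (cases j) simp_all
qed simp

lemma length_concat_blocks: "\<forall>b\<in>set bs. length b = B \<Longrightarrow> length (concat bs) = length bs * B"
  by (induction bs) auto

lemma occ_window_ge_inner_blocks: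
  assumes bl: "\<forall>b\<in>set bs. length b = B" and B: "B > 0" and w: "w \<noteq> []"
    and x: "x = take M (drop s (concat bs))" and sM: "s + M \<le> length (concat bs)" and M: "M \<ge> 2 * B"
  shows "\<exists>mbs. set mbs \<subseteq> set bs \<and> occ w (concat mbs) \<le> occ w x \<and> M \<le> length mbs * B + 2 * B"
proof -
  \<comment> \<open>the blocks \<open>j0, \<dots>, T - 1\<close> lie inside the window\<close>
  define j0 where "j0 = (s + B - 1) div B"
  define T where "T = (s + M) div B"
  define t where "t = T - j0"
  have j0a: "s \<le> j0 * B"
    using mod_div_mult_eq[of "s+B-1" B] mod_less_divisor[OF B, of "s+B-1"]
    unfolding j0_def by linarith
  have j0b: "j0 * B \<le> s + B - 1"
    unfolding j0_def by simp
  have Ta: "T * B \<le> s + M"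
    unfolding T_def by simp
  have Tb: "s + M < T * B + B"
    using mod_div_mult_eq[of "s+M" B] mod_less_divisor[OF B, of "s+M"]
    unfolding T_def by linarith
  have j0T: "j0 \<le> T"
    unfolding j0_def T_def using M by (intro div_le_mono) linarith
  have tB: "t * B = T * B - j0 * B"
    unfolding t_def by (simp add: diff_mult_distrib)
  define mbs where "mbs = take t (drop j0 bs)"
  have bl2: "\<forall>b\<in>set (drop j0 bs). length b = B"
    using bl by (meson in_set_dropD)
  have lenU: "length (concat bs) = length bs * B"
    by (rule length_concat_blocks[OF bl])
  have Tle: "T \<le> length bs"
  proof -
    have "T * B < (length bs + 1) * B"
      using Ta sM lenU B by (simp add: algebra_simps)
    then have "T < length bs + 1"
      using mult_less_cancel2 by blast
    then show ?thesis by simp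
  qed
  have lm: "length mbs = t"
    unfolding mbs_def t_def using Tle by simp
  have "concat mbs = take (t * B) (concat (drop j0 bs))"
    unfolding mbs_def by (rule take_concat_blocks[OF bl2, symmetric])
  also have "concat (drop j0 bs) = drop (j0 * B) (concat bs)"
    by (rule drop_concat_blocks[OF bl, symmetric])
  finally have cm: "concat mbs = take (t * B) (drop (j0 * B) (concat bs))" .
  have "drop (j0 * B - s) x = take (M - (j0 * B - s)) (drop (j0 * B) (concat bs))"
    unfolding x drop_take drop_drop using j0a by simp
  then have "take (t * B) (drop (j0 * B - s) x) = concat mbs"
    unfolding cm using tB Ta j0a j0T by (simp add: min_def)
  then have "occ w (concat mbs) \<le> occ w x"
    using occ_take_le occ_drop_le[OF w] by (metis order_trans)
  moreover have "set mbs \<subseteq> set bs"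
    unfolding mbs_def by (meson in_set_dropD in_set_takeD subsetI)
  moreover have "M \<le> length mbs * B + 2 * B"
    unfolding lm using tB Tb j0b j0T j0a by (simp add: mult_le_mono1)
  ultimately show ?thesis by blast
qed

lemma occ_window_le_covering_blocks:
  assumes bl: "\<forall>b\<in>set bs. length b = B" and B: "B > 0" and w: "w \<noteq> []"
    and x: "x = take M (drop s (concat bs))"
  shows "\<exists>cbs. set cbs \<subseteq> set bs \<and> occ w x \<le> occ w (concat cbs) \<and> length cbs * B \<le> M + 2 * B"
proof -
  \<comment> \<open>the blocks \<open>j1, \<dots>, T - 1\<close> cover the window\<close>
  define j1 where "j1 = s div B"
  define T where "T = (s + M + B - 1) div B"
  define t where "t = T - j1"
  have j1a: "j1 * B \<le> s"
    unfolding j1_def by simp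
  have j1b: "s < j1 * B + B"
    using mod_div_mult_eq[of s B] mod_less_divisor[OF B, of s]
    unfolding j1_def by linarith
  have Ta: "T * B \<le> s + M + B - 1"
    unfolding T_def by simp
  have Tb: "s + M \<le> T * B"
    using mod_div_mult_eq[of "s+M+B-1" B] mod_less_divisor[OF B, of "s+M+B-1"]
    unfolding T_def by linarith
  have j1T: "j1 \<le> T"
    unfolding j1_def T_def by (intro div_le_mono) (use B in linarith)
  have tB: "t * B = T * B - j1 * B"
    unfolding t_def by (simp add: diff_mult_distrib)
  define cbs where "cbs = take t (drop j1 bs)"
  have bl2: "\<forall>b\<in>set (drop j1 bs). length b = B"
    using bl by (meson in_set_dropD)
  have "concat cbs = take (t * B) (concat (drop j1 bs))"
    unfolding cbs_def by (rule take_concat_blocks[OF bl2, symmetric])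
  also have "concat (drop j1 bs) = drop (j1 * B) (concat bs)"
    by (rule drop_concat_blocks[OF bl, symmetric])
  finally have cm: "concat cbs = take (t * B) (drop (j1 * B) (concat bs))" .
  have "take M (drop (s - j1 * B) (concat cbs)) = take M (take (t * B - (s - j1 * B)) (drop s (concat bs)))"
    unfolding cm drop_take drop_drop using j1a by simp
  also have "\<dots> = x"
    unfolding x using tB Tb j1a j1T by (simp add: min_def)
  finally have "occ w x \<le> occ w (concat cbs)"
    using occ_take_le[of w M "drop (s - j1 * B) (concat cbs)"] occ_drop_le[OF w, of "s - j1 * B" "concat cbs"] by simp
  moreover have "set cbs \<subseteq> set bs"
    unfolding cbs_def by (meson in_set_dropD in_set_takeD subsetI)
  moreover have "length cbs * B \<le> M + 2 * B"
  proof -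
    have "length cbs \<le> t"
      unfolding cbs_def by simp
    then have "length cbs * B \<le> t * B"
      by simp
    then show ?thesis using tB Ta j1b j1T by linarith
  qed
  ultimately show ?thesis by blast
qed

lemma ratio_close_of_block_bounds:
  fixes c M B k k' \<mu> \<eta> :: real
  assumes \<eta>: "0 < \<eta>" "\<eta> \<le> 1" and \<mu>: "0 \<le> \<mu>" "\<mu> \<le> 1" and B: "B > 0"
    and long: "16 * B \<le> \<eta> * M" and "0 \<le> c"
    and lower: "k * (B * (\<mu> - \<eta> / 4)) \<le> c" and inner: "M \<le> k * B + 2 * B"
    and upper: "c \<le> k' * (B * (\<mu> + \<eta> / 2))" and covering: "k' * B \<le> M + 2 * B"
  shows "\<bar>c / M - \<mu>\<bar> \<le> \<eta>"
proof -
  have M: "M > 0"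
  proof (rule ccontr)
    assume "\<not> M > 0"
    then have "\<eta> * M \<le> 0"
      using \<eta> by (simp add: mult_nonneg_nonpos)
    then show False
      using long B by linarith
  qed
  have "2 * B * (\<mu> + \<eta> / 2) \<le> 2 * B * (3 / 2)"
    using \<mu> \<eta> B by (intro mult_left_mono) auto
  moreover have "k' * (B * (\<mu> + \<eta> / 2)) \<le> (M + 2 * B) * (\<mu> + \<eta> / 2)"
    using covering \<mu> \<eta> by (simp add: mult.assoc[symmetric] mult_right_mono)
  ultimately have "c \<le> M * (\<mu> + \<eta>)"
    using upper long B by (simp add: algebra_simps)
  moreover have "M * (\<mu> - \<eta>) \<le> c"
  proof (cases "\<mu> - \<eta> / 4 > 0")
    case True
    have "(M - 2 * B) * (\<mu> - \<eta> / 4) \<le> k * B * (\<mu> - \<eta> / 4)"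
      using inner True by (intro mult_right_mono) auto
    moreover have "2 * B * (\<mu> - \<eta> / 4) \<le> 2 * B"
      using \<mu> \<eta> B by (simp add: mult_left_le)
    ultimately show ?thesis
      using lower long B by (simp add: algebra_simps)
  next
    case False
    then have "M * (\<mu> - \<eta>) \<le> 0"
      using M \<eta> by (simp add: mult_nonneg_nonpos)
    then show ?thesis
      using \<open>0 \<le> c\<close> by simp
  qed
  ultimately show ?thesis
    using M by (simp add: abs_le_iff field_simps)
qed

lemma occ_window_freq_close:
  fixes \<mu> \<eta> :: real
  assumes blocks: "\<forall>b\<in>set bs. length b = B" and B: "B > 0" and w: "w \<noteq> []"
    and block_occ: "\<forall>b\<in>set bs. real B * (\<mu> - \<eta> / 4) \<le> real (occ w b) \<and> real (occ w b) \<le> real B * (\<mu> + \<eta> / 4)"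
    and short: "real (length w) \<le> real B * (\<eta> / 4)"
    and \<eta>: "0 < \<eta>" "\<eta> \<le> 1" and \<mu>: "0 \<le> \<mu>" "\<mu> \<le> 1"
    and x: "x = take M (drop s (concat bs))" "s + M \<le> length (concat bs)"
    and long: "16 * real B \<le> \<eta> * real M"
  shows "\<bar>real (occ w x) / real M - \<mu>\<bar> \<le> \<eta>"
proof -
  have "2 * real B \<le> real M"
    using long \<eta> B by (smt (verit) mult_left_le_one_le of_nat_0_le_iff)
  then have M: "2 * B \<le> M"
    by linarith
  obtain mbs where mbs: "set mbs \<subseteq> set bs" "occ w (concat mbs) \<le> occ w x" "M \<le> length mbs * B + 2 * B"
    using occ_window_ge_inner_blocks[OF blocks B w x M] by blast
  obtain cbs where cbs: "set cbs \<subseteq> set bs" "occ w x \<le> occ w (concat cbs)" "length cbs * B \<le> M + 2 * B"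
    using occ_window_le_covering_blocks[OF blocks B w x(1)] by blast
  have "\<forall>b\<in>set mbs. real B * (\<mu> - \<eta> / 4) \<le> real (occ w b)"
    using block_occ mbs(1) by auto
  then have "real (length mbs) * (real B * (\<mu> - \<eta> / 4)) \<le> (\<Sum>b\<leftarrow>mbs. real (occ w b))"
    using sum_list_mono[of mbs "\<lambda>_. real B * (\<mu> - \<eta> / 4)" "\<lambda>b. real (occ w b)"]
    by (simp add: sum_list_triv)
  also have "\<dots> = real (\<Sum>b\<leftarrow>mbs. occ w b)"
    by (induction mbs) simp_all
  also have "\<dots> \<le> real (occ w x)"
    using sum_occ_le_occ_concat[OF w, of mbs] mbs(2) by simp
  finally have lower: "real (length mbs) * (real B * (\<mu> - \<eta> / 4)) \<le> real (occ w x)" .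
  have "(\<Sum>b\<leftarrow>cbs. real (occ w b)) = real (\<Sum>b\<leftarrow>cbs. occ w b)"
    by (induction cbs) simp_all
  then have "real (occ w x) \<le> (\<Sum>b\<leftarrow>cbs. real (occ w b)) + real (length cbs) * real (length w)"
    using occ_concat_le[OF w, of cbs] cbs(2) by (metis le_trans of_nat_add of_nat_le_iff of_nat_mult)
  also have "\<dots> \<le> real (length cbs) * (real B * (\<mu> + \<eta> / 4)) + real (length cbs) * (real B * (\<eta> / 4))"
  proof (intro add_mono mult_left_mono)
    have "\<forall>b\<in>set cbs. real (occ w b) \<le> real B * (\<mu> + \<eta> / 4)"
      using block_occ cbs(1) by auto
    then show "(\<Sum>b\<leftarrow>cbs. real (occ w b)) \<le> real (length cbs) * (real B * (\<mu> + \<eta> / 4))"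
      using sum_list_mono[of cbs "\<lambda>b. real (occ w b)" "\<lambda>_. real B * (\<mu> + \<eta> / 4)"]
      by (simp add: sum_list_triv)
  qed (use short in auto)
  finally have upper: "real (occ w x) \<le> real (length cbs) * (real B * (\<mu> + \<eta> / 2))"
    by (simp add: algebra_simps)
  show ?thesis
  proof (rule ratio_close_of_block_bounds[OF \<eta> \<mu> _ long _ lower _ upper])
    show "real M \<le> real (length mbs) * real B + 2 * real B"
      using mbs(3) by (metis of_nat_add of_nat_le_iff of_nat_mult of_nat_numeral)
    show "real (length cbs) * real B \<le> real M + 2 * real B"
      using cbs(3) by (metis of_nat_add of_nat_le_iff of_nat_mult of_nat_numeral)
  qed (use B in auto)
qed

definition factor_count :: "(nat \<Rightarrow> 'a) \<Rightarrow> 'a list \<Rightarrow> nat \<Rightarrow> nat" where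
  "factor_count y w N = card {i. i < N \<and> map y [i..<i + length w] = w}"

definition words :: "nat \<Rightarrow> 'a list set" where
  "words L = {w. length w = L}"

lemma finite_words: "finite (words L :: 'a :: finite list set)"
  using finite_lists_length_eq[of "UNIV :: 'a set" L] by (simp add: words_def)

lemma agree_iff_factors_eq: "agree y L i j \<longleftrightarrow> map y [i..<i + L] = map y [j..<j + L]"
  by (auto simp: agree_def list_eq_iff_nth_eq)

lemma agree_count_eq_sum_squares:
  fixes y :: "nat \<Rightarrow> 'a :: finite"
  shows "agree_count y L N = (\<Sum>w\<in>words L. factor_count y w N ^ 2)"
proof -
  let ?pos = "\<lambda>w. {i. i < N \<and> map y [i..<i + length w] = w}"
  have "{(i, j). i < N \<and> j < N \<and> agree y L i j} = (\<Union>w\<in>words L. ?pos w \<times> ?pos w)"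
    by (auto simp: agree_iff_factors_eq words_def)
  moreover have "card (\<Union>w\<in>words L. ?pos w \<times> ?pos w) = (\<Sum>w\<in>words L. card (?pos w \<times> ?pos w))"
    by (rule card_UN_disjoint[OF finite_words]) (auto simp: words_def)
  ultimately show ?thesis
    by (simp add: agree_count_def factor_count_def card_cartesian_product power2_eq_square)
qed

lemma sum_factor_count:
  fixes y :: "nat \<Rightarrow> 'a :: finite"
  shows "(\<Sum>w\<in>words L. factor_count y w N) = N"
proof -
  let ?pos = "\<lambda>w. {i. i < N \<and> map y [i..<i + length w] = w}"
  have "{..<N} = (\<Union>w\<in>words L. ?pos w)"
    by (auto simp: words_def)
  moreover have "card (\<Union>w\<in>words L. ?pos w) = (\<Sum>w\<in>words L. card (?pos w))"
    by (rule card_UN_disjoint[OF finite_words]) (auto simp: words_def)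
  ultimately show ?thesis
    unfolding factor_count_def by (metis card_lessThan)
qed

lemma factor_count_eq_occ:
  assumes "w \<noteq> []" "N \<ge> 1"
  shows "factor_count y w N = occ w (map y [0..<N + length w - 1])"
proof -
  have "{i. i < N \<and> map y [i..<i + length w] = w} = occurrences w (map y [0..<N + length w - 1])"
    using assms by (auto simp: occurrences_def take_map drop_map)
  then show ?thesis
    by (simp add: factor_count_def occ_def)
qed

section \<open>Constant-length substitutions\<close>

lemma sum_list_map_bool:
  fixes g :: "bool \<Rightarrow> 'a :: comm_semiring_1"
  shows "(\<Sum>b\<leftarrow>xs. g b) = of_nat (count_list xs True) * g True + of_nat (count_list xs False) * g False"
  by (induction xs) (auto simp: algebra_simps)

lemma count_list_True_False: "count_list xs True + count_list xs False = length xs"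
  by (induction xs) auto

lemma subst_word_append: "subst_word \<zeta> (u @ v) = subst_word \<zeta> u @ subst_word \<zeta> v"
  by (simp add: subst_word_def)

lemma subst_iter_append: "(subst_word \<zeta> ^^ k) (u @ v) = (subst_word \<zeta> ^^ k) u @ (subst_word \<zeta> ^^ k) v"
  by (induction k) (auto simp: subst_word_append)

lemma subst_iter_eq_concat: "(subst_word \<zeta> ^^ k) xs = concat (map (\<lambda>b. (subst_word \<zeta> ^^ k) [b]) xs)"
proof (induction xs)
  case Nil
  show ?case by (induction k) (simp_all add: subst_word_def)
next
  case (Cons x xs)
  then show ?case
    using subst_iter_append[where u = "[x]" and v = xs] by simp
qed

lemma subst_iter_Suc_letter: "(subst_word \<zeta> ^^ Suc k) [a] = (subst_word \<zeta> ^^ k) (\<zeta> a)"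
  by (simp add: funpow_Suc_right subst_word_def del: funpow.simps)

lemma subst_word_in_language:
  assumes "x \<in> subst_language \<zeta>"
  shows "subst_word \<zeta> x \<in> subst_language \<zeta>"
proof -
  obtain k a u v where "(subst_word \<zeta> ^^ k) [a] = u @ x @ v"
    using assms unfolding subst_language_def by blast
  then have "(subst_word \<zeta> ^^ Suc k) [a] = subst_word \<zeta> u @ subst_word \<zeta> x @ subst_word \<zeta> v"
    by (simp add: subst_word_append)
  then show ?thesis
    unfolding subst_language_def by blast
qed

lemma take_in_language:
  assumes "x \<in> subst_language \<zeta>"
  shows "take n x \<in> subst_language \<zeta>"
proof -
  obtain k a u v where "(subst_word \<zeta> ^^ k) [a] = u @ x @ v"
    using assms unfolding subst_language_def by blast
  then have "(subst_word \<zeta> ^^ k) [a] = u @ take n x @ (drop n x @ v)"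
    by simp
  then show ?thesis
    unfolding subst_language_def by blast
qed

lemma set_subst_iter_subset:
  assumes "\<forall>b\<in>S. set (\<zeta> b) \<subseteq> S" "set x \<subseteq> S"
  shows "set ((subst_word \<zeta> ^^ k) x) \<subseteq> S"
  using assms(2)
proof (induction k arbitrary: x)
  case (Suc k)
  have "set (subst_word \<zeta> x) \<subseteq> S"
    using Suc.prems assms(1) unfolding subst_word_def by auto
  then show ?case
    using Suc.IH by (simp add: funpow_Suc_right del: funpow.simps)
qed simp

lemma subst_iter_constant:
  assumes "\<forall>b. \<exists>c. set (\<zeta> b) \<subseteq> {c}" "set x \<subseteq> {c}"
  shows "\<exists>c'. set ((subst_word \<zeta> ^^ k) x) \<subseteq> {c'}"
  using assms(2)
proof (induction k arbitrary: x c)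
  case (Suc k)
  obtain d where "set (\<zeta> c) \<subseteq> {d}"
    using assms(1) by blast
  then have "set (subst_word \<zeta> x) \<subseteq> {d}"
    using Suc.prems unfolding subst_word_def by auto
  then show ?case
    using Suc.IH by (simp add: funpow_Suc_right del: funpow.simps)
qed auto

lemma nth_concat_replicate:
  "length c = q \<Longrightarrow> p < m * q \<Longrightarrow> concat (replicate m c) ! p = c ! (p mod q)"
proof (induction m arbitrary: p)
  case (Suc m)
  then show ?case
    by (cases "p < q") (auto simp: nth_append le_mod_geq)
qed simp

lemma letter_images_distinct:
  assumes "const_length_subst \<zeta> q" "aperiodic_subst \<zeta>"
  shows "\<zeta> False \<noteq> \<zeta> True"
proof
  assume "\<zeta> False = \<zeta> True"
  then have \<zeta>: "\<zeta> b = \<zeta> False" for b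
    by (cases b) auto
  have q: "q \<ge> 2" "length (\<zeta> False) = q"
    using assms(1) unfolding const_length_subst_def by auto
  have image: "subst_word \<zeta> x = concat (replicate (length x) (\<zeta> False))" for x
    unfolding subst_word_def by (induction x) (simp_all, metis \<zeta>)
  obtain y where y: "y \<in> subshift \<zeta>" "\<not> shift_periodic y"
    using assms(2) unfolding aperiodic_subst_def by blast
  have "y (i + q) = y i" for i
  proof -
    obtain k a u v where U: "(subst_word \<zeta> ^^ k) [a] = u @ map y [0..<i + q + 1] @ v"
      using y(1) unfolding subshift_def subst_language_def by blast
    then obtain k' where k: "k = Suc k'"
      using q(1) by (cases k) (auto dest: arg_cong[of _ _ length])
    define m where "m = length ((subst_word \<zeta> ^^ k') [a])"
    have W: "u @ map y [0..<i + q + 1] @ v = concat (replicate m (\<zeta> False))"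
      unfolding U[symmetric] k m_def by (simp add: image)
    have "length (u @ map y [0..<i + q + 1] @ v) = m * q"
      unfolding W using q(2) by (simp add: length_concat sum_list_replicate)
    then have "length u + i + q < m * q"
      by simp
    then have "concat (replicate m (\<zeta> False)) ! (length u + i) = concat (replicate m (\<zeta> False)) ! (length u + i + q)"
      using q(2) by (simp add: nth_concat_replicate)
    then show ?thesis
      unfolding W[symmetric] using q(1) by (simp add: nth_append)
  qed
  then have "shift q y = y"
    by (auto simp: shift_def)
  moreover have "q > 0"
    using q(1) by simp
  ultimately show False
    using y(2) unfolding shift_periodic_def by blast
qed

section \<open>Real sequences\<close>

lemma tendsto_0_of_contraction:
  fixes x e :: "nat \<Rightarrow> real"
  assumes nonneg: "\<And>k. x k \<ge> 0" and step: "\<And>k. x (Suc k) \<le> \<theta> * x k + e k"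
    and e: "e \<longlonglongrightarrow> 0" and \<theta>: "0 \<le> \<theta>" "\<theta> < 1"
  shows "x \<longlonglongrightarrow> 0"
proof (rule LIMSEQ_I)
  fix r :: real assume r: "r > 0"
  obtain K where K: "\<And>k. k \<ge> K \<Longrightarrow> norm (e k) < (1 - \<theta>) * r / 2"
    using LIMSEQ_D[OF e, of "(1 - \<theta>) * r / 2"] r \<theta> by auto
  have after_K: "x (K + j) \<le> \<theta> ^ j * x K + r / 2" for j
  proof (induction j)
    case (Suc j)
    have "x (K + Suc j) \<le> \<theta> * x (K + j) + e (K + j)"
      using step[of "K + j"] by simp
    also have "\<dots> \<le> \<theta> * (\<theta> ^ j * x K + r / 2) + (1 - \<theta>) * r / 2"
      using Suc \<theta> K[of "K + j"] by (intro add_mono mult_left_mono) auto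
    also have "\<dots> = \<theta> ^ Suc j * x K + r / 2"
      by (simp add: field_simps)
    finally show ?case by simp
  qed (use r in simp)
  have "(\<lambda>j. \<theta> ^ j * x K) \<longlonglongrightarrow> 0"
    using \<theta> by (intro tendsto_mult_left_zero LIMSEQ_power_zero) auto
  then obtain J where J: "\<And>j. j \<ge> J \<Longrightarrow> norm (\<theta> ^ j * x K - 0) < r / 2"
    using LIMSEQ_D[of _ 0 "r / 2"] r by (meson half_gt_zero)
  have "norm (x n - 0) < r" if "n \<ge> K + J" for n
  proof -
    have "\<bar>\<theta> ^ (n - K) * x K\<bar> < r / 2"
      using J[of "n - K"] that by simp
    then show ?thesis
      using after_K[of "n - K"] nonneg[of n] that by simp
  qed
  then show "\<exists>N. \<forall>n\<ge>N. norm (x n - 0) < r" by blast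
qed

lemma antitone_increments_sum_bounds:
  fixes D :: "nat \<Rightarrow> real"
  assumes antitone: "\<And>k. k \<ge> i \<Longrightarrow> D (Suc k) - D (Suc (Suc k)) \<le> D k - D (Suc k)"
  shows "D i - D (i + n) \<le> real n * (D i - D (Suc i))"
    and "real n * (D (i + n) - D (Suc (i + n))) \<le> D i - D (i + n)"
proof -
  have decr: "D (i + n) - D (Suc (i + n)) \<le> D (i + n') - D (Suc (i + n'))" if "n' \<le> n" for n n'
    using that
  proof (induction n)
    case (Suc n)
    then show ?case
      using antitone[of "i + n"] by (cases "n' = Suc n") (auto simp: le_Suc_eq)
  qed simp
  show "D i - D (i + n) \<le> real n * (D i - D (Suc i))"
  proof (induction n)
    case (Suc n)
    then show ?case
      using decr[of 0 n] by (simp add: algebra_simps)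
  qed simp
  show "real n * (D (i + n) - D (Suc (i + n))) \<le> D i - D (i + n)"
  proof (induction n)
    case (Suc n)
    have "real (Suc n) * (D (i + Suc n) - D (Suc (i + Suc n))) \<le> real (Suc n) * (D (i + n) - D (Suc (i + n)))"
      using decr[of n "Suc n"] by (intro mult_left_mono) auto
    then show ?case
      using Suc by (simp add: algebra_simps)
  qed simp
qed

lemma increment_bound_of_scaling:
  fixes D :: "nat \<Rightarrow> real" and q :: nat
  assumes q: "q \<ge> 2" and nonneg: "\<And>L. L \<ge> 1 \<Longrightarrow> D L \<ge> 0"
    and decreasing: "\<And>L. L \<ge> 1 \<Longrightarrow> D (Suc L) \<le> D L"
    and antitone: "\<And>k. k \<ge> 1 \<Longrightarrow> D (Suc k) - D (Suc (Suc k)) \<le> D k - D (Suc k)"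
    and scaling: "\<And>L. L \<ge> 1 \<Longrightarrow> D L - D (Suc L) \<le> real q * (D (q * L - q + 1) - D (q * L + q))"
    and L: "L \<ge> 2"
  shows "D L - D (Suc L) \<le> real q * (2 * real q - 1) * D L / (real L - 1)"
proof -
  define a where "a = q * L - q + 1"
  obtain q' L' where "q = Suc q'" "L = Suc L'"
    using q L by (metis Suc_le_D numeral_2_eq_2)
  then have a: "a = L + (q - 1) * (L - 1)" "q * L + q = a + (2 * q - 1)"
    using q L by (simp_all add: a_def algebra_simps)
  then have "a \<ge> 1"
    using L by simp
  have "D L - D (Suc L) \<le> real q * (D a - D (a + (2 * q - 1)))"
    using scaling[of L, unfolded a_def[symmetric] a(2)] L by simp
  also have "\<dots> \<le> real q * (real (2 * q - 1) * (D a - D (Suc a)))"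
    using antitone_increments_sum_bounds(1)[of a D "2 * q - 1"] antitone \<open>a \<ge> 1\<close>
    by (intro mult_left_mono) auto
  finally have step: "D L - D (Suc L) \<le> real q * (2 * real q - 1) * (D a - D (Suc a))"
    using q by (simp add: mult.assoc)
  have "L - 1 \<le> (q - 1) * (L - 1)"
    using q by (simp add: Suc_le_eq)
  then have "real (L - 1) \<le> real ((q - 1) * (L - 1))"
    by (simp only: of_nat_le_iff)
  then have "real (L - 1) * (D a - D (Suc a)) \<le> real ((q - 1) * (L - 1)) * (D a - D (Suc a))"
    by (rule mult_right_mono) (use decreasing[OF \<open>a \<ge> 1\<close>] in simp)
  also have "\<dots> \<le> D L - D a"
    using antitone_increments_sum_bounds(2)[of L D "(q - 1) * (L - 1)"] antitone L by (simp add: a(1))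
  also have "\<dots> \<le> D L"
    using nonneg[OF \<open>a \<ge> 1\<close>] by simp
  finally have "(real L - 1) * (D a - D (Suc a)) \<le> D L"
    using L by simp
  then have "D a - D (Suc a) \<le> D L / (real L - 1)"
    using L by (simp add: field_simps)
  then have "real q * (2 * real q - 1) * (D a - D (Suc a)) \<le> real q * (2 * real q - 1) * (D L / (real L - 1))"
    using q by (intro mult_left_mono) auto
  with step show ?thesis
    by simp
qed

lemma weighted_increment_ratio_close:
  fixes D :: "nat \<Rightarrow> real" and l :: nat
  assumes pos: "D L > 0" and "0 \<le> D (Suc L) - D (Suc (Suc L))"
    and "D (Suc L) - D (Suc (Suc L)) \<le> D L - D (Suc L)"
    and "D L - D (Suc L) \<le> K * D L" and "l \<ge> 1"
  shows "\<bar>(real (l + 1) * D (Suc L) - real l * D (Suc (Suc L)))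
            / (real l * D L - (real l - 1) * D (Suc L)) - 1\<bar> \<le> real l * K"
proof -
  define E0 where "E0 = D L - D (Suc L)"
  define E1 where "E1 = D (Suc L) - D (Suc (Suc L))"
  define R where "R = real l * D L - (real l - 1) * D (Suc L)"
  have "0 \<le> E1" "E1 \<le> E0" "E0 \<le> K * D L"
    using assms by (simp_all add: E0_def E1_def)
  have "R = D L + (real l - 1) * E0"
    by (simp add: R_def E0_def algebra_simps)
  then have R: "R \<ge> D L"
    using \<open>0 \<le> E1\<close> \<open>E1 \<le> E0\<close> \<open>l \<ge> 1\<close> by simp
  have "(real (l + 1) * D (Suc L) - real l * D (Suc (Suc L))) / R - 1 = real l * (E1 - E0) / R"
    using R pos by (simp add: R_def E0_def E1_def field_simps)
  moreover have "\<bar>real l * (E1 - E0) / R\<bar> = real l * (E0 - E1) / R"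
    using \<open>E1 \<le> E0\<close> R pos by (simp add: abs_mult)
  moreover have "real l * (E0 - E1) / R \<le> real l * E0 / D L"
    using R pos \<open>0 \<le> E1\<close> \<open>E1 \<le> E0\<close> by (intro frac_le mult_left_mono) auto
  moreover have "real l * E0 \<le> real l * K * D L"
    using mult_left_mono[OF \<open>E0 \<le> K * D L\<close>, of "real l"] by (simp add: mult.assoc)
  then have "real l * E0 / D L \<le> real l * K"
    using pos by (simp add: divide_le_eq)
  ultimately show ?thesis
    unfolding R_def by linarith
qed

section \<open>Word frequencies\<close>

locale const_subst =
  fixes \<zeta> :: "bool \<Rightarrow> bool list" and q :: nat
  assumes const_length: "const_length_subst \<zeta> q" and primitive: "primitive_subst \<zeta>"
begin

lemma q_ge_2: "q \<ge> 2" and length_letter_image: "length (\<zeta> a) = q"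
  using const_length unfolding const_length_subst_def by auto

lemma length_subst_iter: "length ((subst_word \<zeta> ^^ k) x) = q ^ k * length x"
proof -
  have "length (subst_word \<zeta> x) = q * length x" for x
    by (induction x) (simp_all add: subst_word_def length_letter_image)
  then show ?thesis by (induction k) auto
qed

definition ones :: "bool \<Rightarrow> nat" where
  "ones a = count_list (\<zeta> a) True"

lemma count_list_letter_image_False: "count_list (\<zeta> a) False = q - ones a"
  using count_list_True_False[of "\<zeta> a"] by (simp add: ones_def length_letter_image)

lemma ones_le: "ones a \<le> q"
  using count_list_True_False[of "\<zeta> a"] by (simp add: ones_def length_letter_image)

text \<open>Primitivity excludes \<open>\<zeta> 1 = 1\<^sup>q\<close> and \<open>\<zeta> 0 = 1\<^sup>q, \<zeta> 1 = 0\<^sup>q\<close>.\<close>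

lemma abs_ones_diff_less: "\<bar>real (ones True) - real (ones False)\<bar> < real q"
proof -
  obtain k where k: "\<And>a b. b \<in> set ((subst_word \<zeta> ^^ k) [a])"
    using primitive unfolding primitive_subst_def by blast
  have "ones True < q"
  proof (rule ccontr)
    assume "\<not> ones True < q"
    then have "False \<notin> set (\<zeta> True)"
      using count_list_letter_image_False[of True] ones_le[of True]
      by (auto simp: count_list_0_iff)
    then have "set (\<zeta> True) \<subseteq> {True}"
      by (metis (full_types) singletonI subsetI)
    then have "set ((subst_word \<zeta> ^^ k) [True]) \<subseteq> {True}"
      by (intro set_subst_iter_subset) auto
    then show False using k[of False True] by auto
  qed
  moreover have "\<not> (ones False = q \<and> ones True = 0)"
  proof
    assume "ones False = q \<and> ones True = 0"
    then have "False \<notin> set (\<zeta> False)" "True \<notin> set (\<zeta> True)"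
      using count_list_letter_image_False[of False] by (auto simp: count_list_0_iff ones_def)
    then have "set (\<zeta> False) \<subseteq> {True}" "set (\<zeta> True) \<subseteq> {False}"
      by (metis (full_types) singletonI subsetI)+
    then have "\<forall>b. \<exists>c. set (\<zeta> b) \<subseteq> {c}"
      by (metis (full_types))
    then obtain c where "set ((subst_word \<zeta> ^^ k) [False]) \<subseteq> {c}"
      using subst_iter_constant[of \<zeta> "[False]" False k] by auto
    then show False
      using k[of True False] k[of False False] by auto
  qed
  ultimately show ?thesis
    using ones_le[of True] ones_le[of False] by linarith
qed

definition contraction_factor :: real where
  "contraction_factor = \<bar>real (ones True) - real (ones False)\<bar> / real q"

lemma contraction_factor_bounds: "0 \<le> contraction_factor" "contraction_factor < 1"
  using abs_ones_diff_less q_ge_2 by (auto simp: contraction_factor_def)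

definition image_freq :: "bool list \<Rightarrow> nat \<Rightarrow> bool \<Rightarrow> real" where
  "image_freq w k a = real (occ w ((subst_word \<zeta> ^^ k) [a])) / real q ^ k"

lemma image_freq_bounds:
  assumes "w \<noteq> []"
  shows "0 \<le> image_freq w k a" "image_freq w k a \<le> 1"
proof -
  have "occ w ((subst_word \<zeta> ^^ k) [a]) \<le> q ^ k"
    using occ_le_length[OF assms, of "(subst_word \<zeta> ^^ k) [a]"] by (simp add: length_subst_iter)
  then have "real (occ w ((subst_word \<zeta> ^^ k) [a])) \<le> real q ^ k"
    by (metis of_nat_le_iff of_nat_power)
  then show "image_freq w k a \<le> 1"
    using q_ge_2 by (simp add: image_freq_def)
qed (simp add: image_freq_def)

text \<open>Cutting \<open>\<zeta>\<^sup>k\<^sup>+\<^sup>1(a)\<close> into the \<open>q\<close> blocks \<open>\<zeta>\<^sup>k(b)\<close>, \<open>b\<close> a letter of \<open>\<zeta>(a)\<close>, loses at most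
  \<open>|w|\<close> occurrences per block.\<close>

lemma image_freq_Suc_bounds:
  fixes w :: "bool list" and k :: nat and a :: bool
  assumes w: "w \<noteq> []"
  defines "c \<equiv> real (ones a) / real q * image_freq w k True
                 + real (q - ones a) / real q * image_freq w k False"
  shows "c \<le> image_freq w (Suc k) a" "image_freq w (Suc k) a \<le> c + real (length w) / real q ^ k"
proof -
  define n where "n b = occ w ((subst_word \<zeta> ^^ k) [b])" for b
  let ?blocks = "map (\<lambda>b. (subst_word \<zeta> ^^ k) [b]) (\<zeta> a)"
  have image: "(subst_word \<zeta> ^^ Suc k) [a] = concat ?blocks"
    unfolding subst_iter_Suc_letter by (rule subst_iter_eq_concat)
  have sum: "(\<Sum>b\<leftarrow>?blocks. occ w b) = ones a * n True + (q - ones a) * n False"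
    using sum_list_map_bool[of n "\<zeta> a"]
    by (simp add: n_def comp_def ones_def count_list_letter_image_False)
  have c: "c = real (ones a * n True + (q - ones a) * n False) / real q ^ Suc k"
    using q_ge_2 by (simp add: c_def image_freq_def n_def field_simps)
  have "ones a * n True + (q - ones a) * n False \<le> occ w ((subst_word \<zeta> ^^ Suc k) [a])"
    using sum_occ_le_occ_concat[OF w, of ?blocks] unfolding image sum by simp
  then show "c \<le> image_freq w (Suc k) a"
    unfolding c image_freq_def by (intro divide_right_mono) (simp only: of_nat_le_iff, simp)
  have "occ w ((subst_word \<zeta> ^^ Suc k) [a]) \<le> ones a * n True + (q - ones a) * n False + q * length w"
    using occ_concat_le[OF w, of ?blocks] unfolding image sum by (simp add: length_letter_image)
  then have "image_freq w (Suc k) a \<le> real (ones a * n True + (q - ones a) * n False + q * length w) / real q ^ Suc k"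
    unfolding image_freq_def by (intro divide_right_mono) (simp only: of_nat_le_iff, simp)
  also have "\<dots> = c + real (length w) / real q ^ k"
    using q_ge_2 unfolding c by (simp add: field_simps)
  finally show "image_freq w (Suc k) a \<le> c + real (length w) / real q ^ k" .
qed

lemma min_image_freq_mono:
  assumes "w \<noteq> []"
  shows "min (image_freq w k False) (image_freq w k True)
           \<le> min (image_freq w (Suc k) False) (image_freq w (Suc k) True)"
proof -
  have "min (image_freq w k False) (image_freq w k True) \<le> image_freq w (Suc k) a" for a
  proof -
    let ?s = "real (ones a) / real q" and ?t = "real (q - ones a) / real q"
    have "?s + ?t = 1"
      using q_ge_2 ones_le[of a] by (simp add: field_simps)
    let ?m = "min (image_freq w k False) (image_freq w k True)"
    have "?s * ?m + ?t * ?m \<le> ?s * image_freq w k True + ?t * image_freq w k False"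
      by (intro add_mono mult_left_mono) auto
    moreover have "?s * ?m + ?t * ?m = ?m"
      using \<open>?s + ?t = 1\<close> by (metis distrib_right mult_1)
    ultimately have "?m \<le> ?s * image_freq w k True + ?t * image_freq w k False"
      by simp
    then show ?thesis
      using image_freq_Suc_bounds(1)[OF assms, where a = a and k = k] by linarith
  qed
  then show ?thesis by simp
qed

lemma image_freq_gap_step:
  assumes "w \<noteq> []"
  shows "\<bar>image_freq w (Suc k) True - image_freq w (Suc k) False\<bar>
           \<le> contraction_factor * \<bar>image_freq w k True - image_freq w k False\<bar> + real (length w) / real q ^ k"
proof -
  define c where "c a = real (ones a) / real q * image_freq w k True
                          + real (q - ones a) / real q * image_freq w k False" for a
  have "c True - c False = (real (ones True) - real (ones False)) / real q * (image_freq w k True - image_freq w k False)"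
    using q_ge_2 ones_le[of True] ones_le[of False] by (simp add: c_def field_simps)
  then have "\<bar>c True - c False\<bar> = contraction_factor * \<bar>image_freq w k True - image_freq w k False\<bar>"
    by (simp add: contraction_factor_def abs_mult)
  moreover have "c a \<le> image_freq w (Suc k) a" "image_freq w (Suc k) a \<le> c a + real (length w) / real q ^ k"
    for a
    using image_freq_Suc_bounds[OF assms, where a = a and k = k] by (simp_all add: c_def)
  ultimately show ?thesis
    using abs_ge_self[of "c True - c False"] abs_ge_minus_self[of "c True - c False"]
    by (intro abs_leI) (smt (verit))+
qed

definition word_freq :: "bool list \<Rightarrow> real" where
  "word_freq w = lim (\<lambda>k. min (image_freq w k False) (image_freq w k True))"

lemma image_freq_tendsto:
  assumes w: "w \<noteq> []"
  shows "(\<lambda>k. image_freq w k a) \<longlonglongrightarrow> word_freq w"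
proof -
  define lo where "lo k = min (image_freq w k False) (image_freq w k True)" for k
  define gap where "gap k = \<bar>image_freq w k True - image_freq w k False\<bar>" for k
  have "incseq lo"
    unfolding lo_def using min_image_freq_mono[OF w] by (rule incseq_SucI)
  moreover have "\<forall>k. lo k \<le> 1"
    using image_freq_bounds[OF w] by (simp add: lo_def min.coboundedI1)
  ultimately obtain L where "lo \<longlonglongrightarrow> L"
    using incseq_convergent by blast
  then have lo: "lo \<longlonglongrightarrow> word_freq w"
    unfolding word_freq_def lo_def[symmetric] by (simp add: limI)
  have "(\<lambda>k. real (length w) * (1 / real q) ^ k) \<longlonglongrightarrow> 0"
    using q_ge_2 by (intro tendsto_mult_right_zero LIMSEQ_power_zero) auto
  then have "(\<lambda>k. real (length w) / real q ^ k) \<longlonglongrightarrow> 0"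
    by (simp add: power_one_over)
  then have "gap \<longlonglongrightarrow> 0"
    using image_freq_gap_step[OF w] contraction_factor_bounds
    by (intro tendsto_0_of_contraction[of gap contraction_factor]) (simp_all add: gap_def)
  then have upper: "(\<lambda>k. lo k + gap k) \<longlonglongrightarrow> word_freq w"
    using tendsto_add[OF lo, of gap 0] by simp
  have "lo k \<le> image_freq w k a" for k
    by (cases a) (simp_all add: lo_def)
  moreover have "image_freq w k a \<le> lo k + gap k" for k
    by (cases a) (simp_all add: lo_def gap_def)
  ultimately show ?thesis
    by (intro tendsto_sandwich[OF always_eventually always_eventually lo upper]) simp_all
qed

lemma word_freq_bounds:
  assumes "w \<noteq> []"
  shows "0 \<le> word_freq w" "word_freq w \<le> 1"
  using image_freq_tendsto[OF assms, of True] image_freq_bounds[OF assms]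
  by (auto intro: LIMSEQ_le_const LIMSEQ_le_const2)

lemma image_freq_eventually_close:
  assumes "w \<noteq> []" "\<eta> > 0"
  obtains K where "\<And>k a. k \<ge> K \<Longrightarrow> \<bar>image_freq w k a - word_freq w\<bar> < \<eta>"
proof -
  have "\<forall>\<^sub>F k in sequentially. \<bar>image_freq w k a - word_freq w\<bar> < \<eta>" for a
    using image_freq_tendsto[OF assms(1), of a] assms(2) unfolding tendsto_iff dist_real_def by blast
  then have "\<forall>\<^sub>F k in sequentially. \<forall>a. \<bar>image_freq w k a - word_freq w\<bar> < \<eta>"
    using eventually_conj[of _ sequentially] by (simp add: all_bool_eq)
  then show ?thesis
    using that unfolding eventually_sequentially by blast
qed

text \<open>A long word of the language sits inside some \<open>\<zeta>\<^sup>K(a)\<close>, which is a concatenation of blocks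
  \<open>\<zeta>\<^sup>k(b)\<close> whose frequencies of \<open>w\<close> are already close to the limit.\<close>

lemma word_freq_uniform:
  assumes w: "w \<noteq> []" and "\<eta> > 0"
  shows "\<exists>N. \<forall>x\<in>subst_language \<zeta>. length x \<ge> N \<longrightarrow>
           \<bar>real (occ w x) / real (length x) - word_freq w\<bar> \<le> \<eta>"
proof -
  define \<eta>' where "\<eta>' = min \<eta> 1"
  have \<eta>': "0 < \<eta>'" "\<eta>' \<le> 1" "\<eta>' \<le> \<eta>"
    using \<open>\<eta> > 0\<close> by (auto simp: \<eta>'_def)
  obtain K where K: "\<And>k a. k \<ge> K \<Longrightarrow> \<bar>image_freq w k a - word_freq w\<bar> < \<eta>' / 4"
    using image_freq_eventually_close[OF w, of "\<eta>' / 4"] \<eta>' by auto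
  have q: "real q > 1"
    using q_ge_2 by simp
  obtain k0 where k0: "4 * real (length w) / \<eta>' < real q ^ k0"
    using real_arch_pow[OF q] by blast
  define k where "k = K + k0"
  define B where "B = q ^ k"
  have "real q ^ k0 \<le> real B"
    unfolding B_def k_def using q by (simp add: power_increasing)
  then have "4 * real (length w) / \<eta>' < real B"
    using k0 by linarith
  then have short: "real (length w) \<le> real B * (\<eta>' / 4)"
    using \<eta>' by (simp add: field_simps)
  have block_occ: "real B * (word_freq w - \<eta>' / 4) \<le> real (occ w ((subst_word \<zeta> ^^ k) [c]))
                   \<and> real (occ w ((subst_word \<zeta> ^^ k) [c])) \<le> real B * (word_freq w + \<eta>' / 4)" for c
  proof -
    have "real (occ w ((subst_word \<zeta> ^^ k) [c])) = real B * image_freq w k c"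
      using q_ge_2 by (simp add: image_freq_def B_def)
    moreover have "\<bar>image_freq w k c - word_freq w\<bar> \<le> \<eta>' / 4"
      using K[of k c] by (simp add: k_def)
    then have "word_freq w - \<eta>' / 4 \<le> image_freq w k c" "image_freq w k c \<le> word_freq w + \<eta>' / 4"
      by linarith+
    ultimately show ?thesis
      by (simp add: mult_left_mono)
  qed
  define N where "N = nat \<lceil>16 * real B / \<eta>'\<rceil> + B + 1"
  have "\<bar>real (occ w x) / real (length x) - word_freq w\<bar> \<le> \<eta>'"
    if x: "x \<in> subst_language \<zeta>" "length x \<ge> N" for x
  proof -
    obtain K' a u v where U: "(subst_word \<zeta> ^^ K') [a] = u @ x @ v"
      using x(1) unfolding subst_language_def by blast
    define bs where "bs = map (\<lambda>b. (subst_word \<zeta> ^^ k) [b]) ((subst_word \<zeta> ^^ (K' - k)) [a])"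
    have "q ^ k < q ^ K'"
      using length_subst_iter[of K' "[a]"] x(2) arg_cong[OF U, of length] unfolding N_def B_def by simp
    then have "k \<le> K'"
      using q_ge_2 by simp
    then have "(subst_word \<zeta> ^^ K') [a] = (subst_word \<zeta> ^^ (k + (K' - k))) [a]"
      by simp
    also have "\<dots> = (subst_word \<zeta> ^^ k) ((subst_word \<zeta> ^^ (K' - k)) [a])"
      by (simp add: funpow_add)
    also have "\<dots> = concat bs"
      unfolding bs_def by (rule subst_iter_eq_concat)
    finally have blocks: "u @ x @ v = concat bs"
      unfolding U .
    show ?thesis
    proof (rule occ_window_freq_close[OF _ _ w _ short \<eta>'(1,2) word_freq_bounds[OF w]])
      show "\<forall>b\<in>set bs. length b = B"
        by (auto simp: bs_def B_def length_subst_iter)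
      show "B > 0"
        using q_ge_2 by (simp add: B_def)
      show "\<forall>b\<in>set bs. real B * (word_freq w - \<eta>' / 4) \<le> real (occ w b)
                         \<and> real (occ w b) \<le> real B * (word_freq w + \<eta>' / 4)"
        using block_occ by (auto simp: bs_def)
      show "x = take (length x) (drop (length u) (concat bs))"
        unfolding blocks[symmetric] by simp
      show "length u + length x \<le> length (concat bs)"
        unfolding blocks[symmetric] by simp
      have "16 * real B / \<eta>' \<le> real (length x)"
        using x(2) unfolding N_def by linarith
      then show "16 * real B \<le> \<eta>' * real (length x)"
        using \<eta>' by (simp add: field_simps)
    qed
  qed
  then show ?thesis
    using \<eta>' by (meson order_trans)
qed

lemma factor_freq_tendsto:
  assumes y: "y \<in> subshift \<zeta>" and w: "w \<noteq> []"
  shows "(\<lambda>N. real (factor_count y w N) / real N) \<longlonglongrightarrow> word_freq w"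
proof -
  define X where "X N = map y [0..<N + length w - 1]" for N
  have len_X: "real (length (X N)) = real N + (real (length w) - 1)" for N
    using w by (simp add: X_def Suc_leI)
  have "(\<lambda>N. real (occ w (X N)) / real (length (X N))) \<longlonglongrightarrow> word_freq w"
  proof (rule LIMSEQ_I)
    fix r :: real assume "r > 0"
    then obtain N0 where N0: "\<And>x. x \<in> subst_language \<zeta> \<Longrightarrow> length x \<ge> N0 \<Longrightarrow>
                               \<bar>real (occ w x) / real (length x) - word_freq w\<bar> \<le> r / 2"
      using word_freq_uniform[OF w, of "r / 2"] by auto
    have "X N \<in> subst_language \<zeta>" for N
      using y by (simp add: X_def subshift_def)
    moreover have "length (X N) \<ge> N0" if "N \<ge> N0" for N
      using that w by (cases w) (auto simp: X_def)
    ultimately have "\<bar>real (occ w (X N)) / real (length (X N)) - word_freq w\<bar> \<le> r / 2" if "N \<ge> N0" for N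
      using N0 that by blast
    then show "\<exists>M. \<forall>N\<ge>M. norm (real (occ w (X N)) / real (length (X N)) - word_freq w) < r"
      using \<open>r > 0\<close> by fastforce
  qed
  moreover have "(\<lambda>N. real (length (X N)) / real N) \<longlonglongrightarrow> 1"
    unfolding len_X by real_asymp
  ultimately have "(\<lambda>N. real (occ w (X N)) / real (length (X N)) * (real (length (X N)) / real N))
                     \<longlonglongrightarrow> word_freq w"
    using tendsto_mult by fastforce
  moreover have "\<forall>\<^sub>F N in sequentially. real (occ w (X N)) / real (length (X N)) * (real (length (X N)) / real N)
                   = real (factor_count y w N) / real N"
  proof (rule eventually_sequentiallyI[of 1])
    fix N :: nat assume "N \<ge> 1"
    moreover have "length (X N) > 0"
      using \<open>N \<ge> 1\<close> w by (cases w) (auto simp: X_def)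
    ultimately show "real (occ w (X N)) / real (length (X N)) * (real (length (X N)) / real N)
                       = real (factor_count y w N) / real N"
      using w by (simp add: factor_count_eq_occ X_def)
  qed
  ultimately show ?thesis
    by (rule Lim_transform_eventually)
qed

subsection \<open>The correlation sum\<close>

definition corr_sum :: "nat \<Rightarrow> real" where
  "corr_sum L = (\<Sum>w\<in>words L. word_freq w ^ 2)"

lemma agree_count_density:
  assumes "y \<in> subshift \<zeta>" "L \<ge> 1"
  shows "(\<lambda>N. real (agree_count y L N) / real N ^ 2) \<longlonglongrightarrow> corr_sum L"
proof -
  have "(\<lambda>N. \<Sum>w\<in>words L. (real (factor_count y w N) / real N) ^ 2) \<longlonglongrightarrow> corr_sum L"
    unfolding corr_sum_def using assms
    by (intro tendsto_sum tendsto_power factor_freq_tendsto) (auto simp: words_def)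
  then show ?thesis
    by (simp add: agree_count_eq_sum_squares power_divide sum_divide_distrib)
qed

lemma sum_word_freq:
  assumes "y \<in> subshift \<zeta>" "L \<ge> 1"
  shows "(\<Sum>w\<in>words L. word_freq w) = 1"
proof -
  have "(\<lambda>N. \<Sum>w\<in>words L. real (factor_count y w N) / real N) \<longlonglongrightarrow> (\<Sum>w\<in>words L. word_freq w)"
    using assms by (intro tendsto_sum factor_freq_tendsto) (auto simp: words_def)
  moreover have "(\<Sum>w\<in>words L. real (factor_count y w N) / real N) = 1" if "N \<ge> 1" for N
    using that by (simp flip: sum_divide_distrib of_nat_sum add: sum_factor_count)
  then have "(\<lambda>N. \<Sum>w\<in>words L. real (factor_count y w N) / real N) \<longlonglongrightarrow> 1"
    by (intro tendsto_eventually eventually_sequentiallyI[of 1]) simp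
  ultimately show ?thesis
    using LIMSEQ_unique by blast
qed

lemma corr_sum_pos:
  assumes "y \<in> subshift \<zeta>" "L \<ge> 1"
  shows "corr_sum L > 0"
proof -
  obtain w where w: "w \<in> words L" "word_freq w \<noteq> 0"
    using sum_word_freq[OF assms] by (metis (no_types, lifting) sum.neutral zero_neq_one)
  then have "0 < word_freq w ^ 2"
    by simp
  also have "\<dots> \<le> corr_sum L"
    unfolding corr_sum_def using w(1) finite_words by (intro member_le_sum) auto
  finally show ?thesis .
qed

lemma partial_agree_pairs_density:
  assumes "y \<in> subshift \<zeta>" "1 \<le> L" "L \<le> L'"
  shows "(\<lambda>N. real (card (partial_agree_pairs y L L' N)) / real N ^ 2) \<longlonglongrightarrow> corr_sum L - corr_sum L'"
  unfolding card_partial_agree_pairs[OF assms(3)] diff_divide_distrib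
  using assms by (intro tendsto_diff agree_count_density) auto

lemma corr_sum_Suc_le:
  assumes "y \<in> subshift \<zeta>" "L \<ge> 1"
  shows "corr_sum (Suc L) \<le> corr_sum L"
proof -
  have "0 \<le> corr_sum L - corr_sum (Suc L)"
    using partial_agree_pairs_density[OF assms(1,2), of "Suc L"] by (rule LIMSEQ_le_const) auto
  then show ?thesis by simp
qed

lemma corr_sum_increment_Suc_le:
  assumes y: "y \<in> subshift \<zeta>" and "L \<ge> 1"
  shows "corr_sum (Suc L) - corr_sum (Suc (Suc L)) \<le> corr_sum L - corr_sum (Suc L)"
proof -
  let ?a = "\<lambda>N. real (card (partial_agree_pairs y (Suc L) (Suc (Suc L)) N))"
  let ?b = "\<lambda>N. real (card (partial_agree_pairs y L (Suc L) N))"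
  have "(\<lambda>N. ?a N / real N ^ 2 * (real N / real (Suc N)) ^ 2)
          \<longlonglongrightarrow> (corr_sum (Suc L) - corr_sum (Suc (Suc L))) * 1"
    using assms by (intro tendsto_mult partial_agree_pairs_density) (auto, real_asymp)
  moreover have "\<forall>\<^sub>F N in sequentially. ?a N / real N ^ 2 * (real N / real (Suc N)) ^ 2 = ?a N / real (Suc N) ^ 2"
    by (rule eventually_sequentiallyI[of 1]) (simp add: power_divide)
  ultimately have "(\<lambda>N. ?a N / real (Suc N) ^ 2) \<longlonglongrightarrow> corr_sum (Suc L) - corr_sum (Suc (Suc L))"
    by (simp add: Lim_transform_eventually)
  moreover have "(\<lambda>N. ?b (Suc N) / real (Suc N) ^ 2) \<longlonglongrightarrow> corr_sum L - corr_sum (Suc L)"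
    using LIMSEQ_Suc[OF partial_agree_pairs_density[OF y \<open>L \<ge> 1\<close>, of "Suc L"]] by simp
  moreover have "?a N / real (Suc N) ^ 2 \<le> ?b (Suc N) / real (Suc N) ^ 2" for N
    using card_partial_agree_pairs_Suc_le[of y L N] by (intro divide_right_mono) auto
  ultimately show ?thesis
    by (intro LIMSEQ_le) auto
qed

definition subst_seq :: "(nat \<Rightarrow> bool) \<Rightarrow> nat \<Rightarrow> bool" where
  "subst_seq y p = \<zeta> (y (p div q)) ! (p mod q)"

lemma subst_seq_shift: "subst_seq y (q * i + p) = \<zeta> (y (i + p div q)) ! (p mod q)"
  using q_ge_2 by (simp add: subst_seq_def)

lemma nth_subst_word: "i < length x \<Longrightarrow> r < q \<Longrightarrow> subst_word \<zeta> x ! (q * i + r) = \<zeta> (x ! i) ! r"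
proof (induction x arbitrary: i)
  case (Cons c x)
  then show ?case
    by (cases i) (auto simp: subst_word_def nth_append length_letter_image)
qed simp

lemma subst_seq_prefix: "map (subst_seq y) [0..<n] = take n (subst_word \<zeta> (map y [0..<n]))"
proof (rule nth_equalityI)
  show "length (map (subst_seq y) [0..<n]) = length (take n (subst_word \<zeta> (map y [0..<n])))"
    using q_ge_2 length_subst_iter[of 1 "map y [0..<n]"] by simp
next
  fix p assume "p < length (map (subst_seq y) [0..<n])"
  then have p: "p < n" "p div q < n"
    using le_less_trans[OF div_le_dividend] by auto
  have "take n (subst_word \<zeta> (map y [0..<n])) ! p = subst_word \<zeta> (map y [0..<n]) ! (q * (p div q) + p mod q)"
    using p(1) by simp
  also have "\<dots> = \<zeta> (map y [0..<n] ! (p div q)) ! (p mod q)"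
    by (rule nth_subst_word) (use p(2) q_ge_2 in auto)
  finally show "map (subst_seq y) [0..<n] ! p = take n (subst_word \<zeta> (map y [0..<n])) ! p"
    using p by (simp add: subst_seq_def)
qed

lemma subst_seq_in_subshift: "y \<in> subshift \<zeta> \<Longrightarrow> subst_seq y \<in> subshift \<zeta>"
  unfolding subshift_def by (auto simp: subst_seq_prefix intro!: take_in_language subst_word_in_language)

lemma agree_subst_seq:
  assumes "agree y L i j" "L \<ge> 1" "r < q"
  shows "agree (subst_seq y) (q * L - q + 1) (q * i + r) (q * j + r)"
  unfolding agree_def
proof (intro allI impI)
  fix s assume "s < q * L - q + 1"
  then have "r + s < q * L"
    using assms(2,3) by (cases L) auto
  then have "(r + s) div q < L"
    using q_ge_2 by (simp add: div_less_iff_less_mult mult.commute)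
  then show "subst_seq y (q * i + r + s) = subst_seq y (q * j + r + s)"
    using assms(1) subst_seq_shift[of y i "r + s"] subst_seq_shift[of y j "r + s"]
    by (simp add: agree_def add.assoc)
qed

lemma not_agree_subst_seq:
  assumes distinct: "\<zeta> False \<noteq> \<zeta> True" and "y (i + L) \<noteq> y (j + L)" "L \<ge> 1" "r < q"
  shows "\<not> agree (subst_seq y) (q * L + q) (q * i + r) (q * j + r)"
proof
  assume agree: "agree (subst_seq y) (q * L + q) (q * i + r) (q * j + r)"
  have "\<zeta> (y (i + L)) \<noteq> \<zeta> (y (j + L))"
    using assms(2) distinct by (cases "y (i + L)"; cases "y (j + L)") auto
  then obtain u where u: "u < q" "\<zeta> (y (i + L)) ! u \<noteq> \<zeta> (y (j + L)) ! u"
    using nth_equalityI[of "\<zeta> (y (i + L))" "\<zeta> (y (j + L))"] by (auto simp: length_letter_image)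
  have "r \<le> q * L + u"
    using \<open>r < q\<close> \<open>L \<ge> 1\<close> by (cases L) auto
  then have "q * i + r + (q * L + u - r) = q * (i + L) + u" "q * j + r + (q * L + u - r) = q * (j + L) + u"
    "q * L + u - r < q * L + q"
    using u(1) by (simp_all add: algebra_simps)
  then have "subst_seq y (q * (i + L) + u) = subst_seq y (q * (j + L) + u)"
    using agree unfolding agree_def by metis
  then show False
    using u q_ge_2 by (simp add: subst_seq_def)
qed

text \<open>Each pair counted on the left spawns \<open>q\<close> pairs \<open>(q i + r, q j + r)\<close>, \<open>r < q\<close>, in the
  image sequence.\<close>

lemma card_partial_agree_pairs_subst_seq:
  assumes "\<zeta> False \<noteq> \<zeta> True" "L \<ge> 1"
  shows "q * card (partial_agree_pairs y L (Suc L) N)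
           \<le> card (partial_agree_pairs (subst_seq y) (q * L - q + 1) (q * L + q) (q * N))"
proof -
  let ?spawn = "\<lambda>((i, j), r). (q * i + r, q * j + r)"
  have "?spawn ` (partial_agree_pairs y L (Suc L) N \<times> {..<q})
          \<subseteq> partial_agree_pairs (subst_seq y) (q * L - q + 1) (q * L + q) (q * N)"
  proof (rule image_subsetI)
    fix x assume x_in: "x \<in> partial_agree_pairs y L (Suc L) N \<times> {..<q}"
    obtain i j r where x: "x = ((i, j), r)"
      by (metis prod.collapse)
    have ij: "i < N" "j < N" "agree y L i j" "\<not> agree y (Suc L) i j" and "r < q"
      using x_in unfolding x partial_agree_pairs_def by auto
    have "q * a + r < q * N" if "a < N" for a
    proof -
      have "q * a + r < q * Suc a"
        using \<open>r < q\<close> by simp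
      also have "\<dots> \<le> q * N"
        using that by (intro mult_le_mono2) simp
      finally show ?thesis .
    qed
    then have "q * i + r < q * N" "q * j + r < q * N"
      using ij(1,2) by auto
    moreover have "y (i + L) \<noteq> y (j + L)"
      using ij(3,4) by (auto simp: agree_def less_Suc_eq)
    then have "\<not> agree (subst_seq y) (q * L + q) (q * i + r) (q * j + r)"
      using not_agree_subst_seq[OF assms(1) _ assms(2) \<open>r < q\<close>] by blast
    moreover have "agree (subst_seq y) (q * L - q + 1) (q * i + r) (q * j + r)"
      using agree_subst_seq[OF ij(3) assms(2) \<open>r < q\<close>] .
    ultimately show "?spawn x \<in> partial_agree_pairs (subst_seq y) (q * L - q + 1) (q * L + q) (q * N)"
      unfolding x partial_agree_pairs_def by (simp only: case_prod_conv mem_Collect_eq simp_thms)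
  qed
  moreover have "inj_on ?spawn (partial_agree_pairs y L (Suc L) N \<times> {..<q})"
  proof (rule inj_onI)
    have cancel: "i = i' \<and> r = r'" if "q * i + r = q * i' + r'" "r < q" "r' < q" for i r i' r'
    proof -
      have "(q * i + r) mod q = (q * i' + r') mod q" "(q * i + r) div q = (q * i' + r') div q"
        using that(1) by simp_all
      then show ?thesis
        using that(2,3) q_ge_2 by simp
    qed
    fix a b assume "a \<in> partial_agree_pairs y L (Suc L) N \<times> {..<q}" "b \<in> partial_agree_pairs y L (Suc L) N \<times> {..<q}"
      and eq: "?spawn a = ?spawn b"
    moreover obtain i j r i' j' r' where "a = ((i, j), r)" "b = ((i', j'), r')"
      by (metis prod.collapse)
    ultimately show "a = b"
      using cancel[of i r i' r'] cancel[of j r j' r'] by auto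
  qed
  ultimately have "card (partial_agree_pairs y L (Suc L) N \<times> {..<q})
                     \<le> card (partial_agree_pairs (subst_seq y) (q * L - q + 1) (q * L + q) (q * N))"
    by (intro card_inj_on_le finite_partial_agree_pairs)
  then show ?thesis
    by (simp add: card_cartesian_product mult.commute)
qed

lemma corr_sum_increment_le_scaled:
  assumes "\<zeta> False \<noteq> \<zeta> True" and y: "y \<in> subshift \<zeta>" and L: "L \<ge> 1"
  shows "corr_sum L - corr_sum (Suc L) \<le> real q * (corr_sum (q * L - q + 1) - corr_sum (q * L + q))"
proof -
  let ?c = "\<lambda>N. real (card (partial_agree_pairs y L (Suc L) N))"
  let ?d = "\<lambda>M. real (card (partial_agree_pairs (subst_seq y) (q * L - q + 1) (q * L + q) M))"
  have "(\<lambda>N. ?c N / real N ^ 2 / real q) \<longlonglongrightarrow> (corr_sum L - corr_sum (Suc L)) / real q"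
    by (intro tendsto_divide tendsto_const partial_agree_pairs_density[OF y]) (use L q_ge_2 in auto)
  moreover have "(\<lambda>N. ?d (q * N) / real (q * N) ^ 2) \<longlonglongrightarrow> corr_sum (q * L - q + 1) - corr_sum (q * L + q)"
  proof -
    have "strict_mono (\<lambda>N. q * N)"
      using q_ge_2 by (simp add: strict_mono_def)
    moreover have "(\<lambda>M. ?d M / real M ^ 2) \<longlonglongrightarrow> corr_sum (q * L - q + 1) - corr_sum (q * L + q)"
      by (intro partial_agree_pairs_density subst_seq_in_subshift[OF y]) (use L q_ge_2 in auto)
    ultimately show ?thesis
      using LIMSEQ_subseq_LIMSEQ by (fastforce simp: comp_def)
  qed
  moreover have "?c N / real N ^ 2 / real q \<le> ?d (q * N) / real (q * N) ^ 2" for N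
  proof -
    have "real q * ?c N \<le> ?d (q * N)"
      using card_partial_agree_pairs_subst_seq[OF assms(1) L, of y N] by (metis of_nat_le_iff of_nat_mult)
    then have "real q * ?c N / real (q * N) ^ 2 \<le> ?d (q * N) / real (q * N) ^ 2"
      by (intro divide_right_mono) auto
    then show ?thesis
      using q_ge_2 by (cases "N = 0") (simp_all add: power2_eq_square field_simps)
  qed
  ultimately have "(corr_sum L - corr_sum (Suc L)) / real q \<le> corr_sum (q * L - q + 1) - corr_sum (q * L + q)"
    by (intro LIMSEQ_le) auto
  then show ?thesis
    using q_ge_2 by (simp add: field_simps)
qed

lemma rp_segments_density:
  assumes y: "y \<in> subshift \<zeta>" and "l \<ge> 1" "h \<ge> 1" "m \<ge> 1"
  shows "(\<lambda>n. real (card (rp_segments (delay_embed m y) n ((1/2) ^ h) l)) / (real n ^ 2 - real n))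
           \<longlonglongrightarrow> corr_sum (h + m + l - 2)"
proof -
  let ?L = "h + m + l - 2"
  let ?g = "\<lambda>N. real (agree_count y ?L N) / real N ^ 2"
  have "filterlim (\<lambda>n. Suc n - l) sequentially sequentially"
    by (rule filterlim_compose[OF filterlim_minus_const_nat_at_top filterlim_Suc])
  then have lim: "(\<lambda>n. ?g (Suc n - l)) \<longlonglongrightarrow> corr_sum ?L"
    using assms by (intro filterlim_compose[OF agree_count_density[OF y]]) auto
  have "(\<lambda>n. ?g (Suc n - l) * ((real n + 1 - real l) ^ 2 / (real n ^ 2 - real n))
                  - (real n + 1 - real l) / (real n ^ 2 - real n)) \<longlonglongrightarrow> corr_sum ?L * 1 - 0"
    by (intro tendsto_diff tendsto_mult lim) real_asymp+
  moreover have "\<forall>\<^sub>F n in sequentially.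
      ?g (Suc n - l) * ((real n + 1 - real l) ^ 2 / (real n ^ 2 - real n)) - (real n + 1 - real l) / (real n ^ 2 - real n)
        = real (card (rp_segments (delay_embed m y) n ((1/2) ^ h) l)) / (real n ^ 2 - real n)"
  proof (rule eventually_sequentiallyI[of "l + 2"])
    fix n assume "n \<ge> l + 2"
    then have e: "real (Suc n - l) = real n + 1 - real l" and nz: "real n + 1 - real l \<noteq> 0"
      by simp_all
    have "?g (Suc n - l) * (real n + 1 - real l) ^ 2 = real (agree_count y ?L (Suc n - l))"
      using nz unfolding e by simp
    then show "?g (Suc n - l) * ((real n + 1 - real l) ^ 2 / (real n ^ 2 - real n))
                 - (real n + 1 - real l) / (real n ^ 2 - real n)
               = real (card (rp_segments (delay_embed m y) n ((1/2) ^ h) l)) / (real n ^ 2 - real n)"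
      unfolding card_rp_segments_delay_embed[OF assms(2-4)] e
      by (simp add: diff_divide_distrib)
  qed
  ultimately show ?thesis
    by (simp add: Lim_transform_eventually)
qed

lemma RR_inf_delay_embed:
  assumes "y \<in> subshift \<zeta>" "l \<ge> 1" "h \<ge> 1" "m \<ge> 1"
  shows "RR_inf l (delay_embed m y) ((1/2) ^ h)
           = real l * corr_sum (h + m + l - 2) - (real l - 1) * corr_sum (h + m + l - 1)"
proof -
  have "h + m + Suc l - 2 = h + m + l - 1"
    using assms by simp
  then have "(\<lambda>n. RR l (delay_embed m y) n ((1/2) ^ h))
               \<longlonglongrightarrow> real l * corr_sum (h + m + l - 2) - (real l - 1) * corr_sum (h + m + l - 1)"
    unfolding RR_eq_rp_segments diff_divide_distrib times_divide_eq_right[symmetric]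
    using assms rp_segments_density[of y "Suc l" h m]
    by (intro tendsto_diff tendsto_mult_left rp_segments_density) auto
  then show ?thesis
    unfolding RR_inf_def by (rule limI)
qed

lemma corr_sum_increment_le:
  assumes "\<zeta> False \<noteq> \<zeta> True" "y \<in> subshift \<zeta>" "L \<ge> 2"
  shows "corr_sum L - corr_sum (Suc L) \<le> real q * (2 * real q - 1) * corr_sum L / (real L - 1)"
  using q_ge_2 corr_sum_pos[OF assms(2)] corr_sum_Suc_le[OF assms(2)]
    corr_sum_increment_Suc_le[OF assms(2)] corr_sum_increment_le_scaled[OF assms(1,2)] assms(3)
  by (intro increment_bound_of_scaling) (auto intro: less_imp_le)

lemma RR_inf_ratio_close:
  assumes "\<zeta> False \<noteq> \<zeta> True" "y \<in> subshift \<zeta>" "l \<ge> 1" "m \<ge> 1" "h \<ge> 2"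
  shows "\<bar>RR_inf (l + 1) (delay_embed m y) ((1/2) ^ h) / RR_inf l (delay_embed m y) ((1/2) ^ h) - 1\<bar>
           \<le> real l * (real q * (2 * real q - 1) / (real h + real m + real l - 3))"
proof -
  define L where "L = h + m + l - 2"
  have L: "L \<ge> 2" "h + m + l - 1 = Suc L" "h + m + l = Suc (Suc L)"
    "real L - 1 = real h + real m + real l - 3"
    using assms(3-5) by (auto simp: L_def)
  have "RR_inf l (delay_embed m y) ((1/2) ^ h) = real l * corr_sum L - (real l - 1) * corr_sum (Suc L)"
    using RR_inf_delay_embed[OF assms(2,3), of h m] assms(4,5) L(2) by (simp add: L_def)
  moreover have "RR_inf (l + 1) (delay_embed m y) ((1/2) ^ h)
                   = real (l + 1) * corr_sum (Suc L) - real l * corr_sum (Suc (Suc L))"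
    using RR_inf_delay_embed[OF assms(2), of "l + 1" h m] assms(4,5) L(2,3) by simp
  moreover have "corr_sum L - corr_sum (Suc L) \<le> real q * (2 * real q - 1) / (real L - 1) * corr_sum L"
    using corr_sum_increment_le[OF assms(1,2) L(1)] by (simp add: field_simps)
  then have "\<bar>(real (l + 1) * corr_sum (Suc L) - real l * corr_sum (Suc (Suc L)))
              / (real l * corr_sum L - (real l - 1) * corr_sum (Suc L)) - 1\<bar>
               \<le> real l * (real q * (2 * real q - 1) / (real L - 1))"
    using L(1) corr_sum_Suc_le[OF assms(2), of "Suc L"] corr_sum_increment_Suc_le[OF assms(2), of L]
    by (intro weighted_increment_ratio_close corr_sum_pos[OF assms(2)] assms(3)) auto
  ultimately show ?thesis
    unfolding L(4) by simp
qed

end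

theorem lemma6p1:
  fixes \<zeta> :: "bool \<Rightarrow> bool list" and q :: nat
    and y :: "nat \<Rightarrow> bool" and m l :: nat
  assumes "const_length_subst \<zeta> q"
    and "primitive_subst \<zeta>"
    and "aperiodic_subst \<zeta>"
    and "y \<in> subshift \<zeta>"
    and "m \<ge> 1" and "l \<ge> 1"
  shows "(\<lambda>h::nat. RR_inf (l + 1) (delay_embed m y) ((1/2) ^ h)
                  / RR_inf l (delay_embed m y) ((1/2) ^ h)) \<longlonglongrightarrow> 1"
proof -
  interpret const_subst \<zeta> q
    using assms(1,2) by unfold_locales
  define R where "R h = RR_inf (l + 1) (delay_embed m y) ((1/2) ^ h) / RR_inf l (delay_embed m y) ((1/2) ^ h)"
    for h :: nat
  define bound where "bound h = real l * (real q * (2 * real q - 1) / (real h + real m + real l - 3))"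
    for h :: nat
  have "bound \<longlonglongrightarrow> 0"
    unfolding bound_def by real_asymp
  moreover have "\<forall>\<^sub>F h in sequentially. norm (R h - 1) \<le> norm (bound h) * 1"
  proof (rule eventually_sequentiallyI[of 2])
    fix h :: nat assume "h \<ge> 2"
    then show "norm (R h - 1) \<le> norm (bound h) * 1"
      using order_trans[OF RR_inf_ratio_close[OF letter_images_distinct[OF assms(1,3)] assms(4,6,5)] abs_ge_self]
      by (simp add: R_def bound_def)
  qed
  ultimately have "(\<lambda>h. R h - 1) \<longlonglongrightarrow> 0"
    by (rule tendsto_0_le)
  then show ?thesis
    by (simp add: LIM_zero_iff R_def)
qed

end
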